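(* Under the standing assumptions, the matrices $\Gamma_{1,j}(a)$ ($0\le j\le n$) and $Q_{2,j}(a)$ ($0\le j\le n-1$) are invertible, and with $\mathbf r_j:=\Gamma_{1,j}(a)^{-1}\Theta_{1,j}(a)$ and $\mathbf t_j:=Q_{2,j}(a)^{-1}P_{2,j}(a)$ one has, for all $z\in\mathbb C$, $$d^{(2j+1)}(z)=\begin{pmatrix}I_q&\mathbf r_j\\0_q&I_q\end{pmatrix}\begin{pmatrix}I_q&0_q\\-(z-a)\mathbf m_j&I_q\end{pmatrix}\begin{pmatrix}I_q&-\mathbf r_j\\0_q&I_q\end{pmatrix},\qquad 0\le j\le n,$$ $$d^{(2j+2)}(z)=\begin{pmatrix}I_q&0_q\\-\mathbf t_j&I_q\end{pmatrix}\begin{pmatrix}I_q&(z-a)\mathbf l_j\\0_q&I_q\end{pmatrix}\begin{pmatrix}I_q&0_q\\ \mathbf t_j&I_q\end{pmatrix},\qquad 0\le j\le n-1.$$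
   Context: Let $q,n\in\mathbb N$ and let $a<b$ be real numbers. All matrices are complex; $I_q$, $0_q$ are the $q\times q$ identity and zero matrices. Let $s_0,\dots,s_{2n+1}$ be Hermitian $q\times q$ matrices and set $\widehat s_j:=-ab\,s_j+(a+b)s_{j+1}-s_{j+2}$. Define $H_{1,j}:=(s_{l+k})_{l,k=0}^j$, $H_{2,j}:=(\widehat s_{l+k})_{l,k=0}^{j}$, $K_{1,j}:=(bs_{l+k}-s_{l+k+1})_{l,k=0}^{j}$, $K_{2,j}:=(-as_{l+k}+s_{l+k+1})_{l,k=0}^j$. Standing assumption: $H_{1,n},H_{2,n-1},K_{1,n},K_{2,n}$ are positive definite. Let $T_0:=0_q$ and, for $j\ge1$, let $T_j$ be the $(j+1)\times(j+1)$ block matrix (blocks $q\times q$) with $I_q$ in block positions $(l+1,l)$, $l=0,\dots,j-1$, and $0_q$ elsewhere; $R_j(z):=(I_{(j+1)q}-zT_j)^{-1}$; $v_j:=\mathrm{col}(I_q,0_q,\dots,0_q)\in\mathbb C^{(j+1)q\times q}$. Let $u_{2,0}:=-(a+b)s_0+s_1$, $u_{2,j}:=\mathrm{col}(u_{2,0},-\widehat s_0,\dots,-\widehat s_{j-1})$, $\widetilde u_{1,j}:=\mathrm{col}(s_0,s_1-bs_0,\dots,s_j-bs_{j-1})$; for $j\ge1$, $Y_{2,j}:=\mathrm{col}(\widehat s_j,\dots,\widehat s_{2j-1})$, $\widetilde Y_{1,j}:=\mathrm{col}(bs_j-s_{j+1},\dots,bs_{2j-1}-s_{2j})$. Schur complements: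 $\widehat H_{2,0}:=\widehat s_0$, $\widehat H_{2,j}:=\widehat s_{2j}-Y_{2,j}^*H_{2,j-1}^{-1}Y_{2,j}$; $\widehat K_{1,0}:=bs_0-s_1$, $\widehat K_{1,j}:=bs_{2j}-s_{2j+1}-\widetilde Y_{1,j}^*K_{1,j-1}^{-1}\widetilde Y_{1,j}$. Polynomials: $P_{2,0}:=I_q$, $Q_{2,0}(z):=-(u_{2,0}+zs_0)$, $\Gamma_{1,0}:=I_q$, $\Theta_{1,0}:=s_0$; for $j\ge1$: $P_{2,j}(z):=(-Y_{2,j}^*H_{2,j-1}^{-1},I_q)R_j(z)v_j$, $Q_{2,j}(z):=-(-Y_{2,j}^*H_{2,j-1}^{-1},I_q)R_j(z)(u_{2,j}+zv_js_0)$, $\Gamma_{1,j}(z):=(-\widetilde Y_{1,j}^*K_{1,j-1}^{-1},I_q)R_j(z)v_j$, $\Theta_{1,j}(z):=(-\widetilde Y_{1,j}^*K_{1,j-1}^{-1},I_q)R_j(z)\widetilde u_{1,j}$. DSM parameters: $\lambda_j:=(u_{2,j}+av_js_0)^*R_j(a)^*H_{2,j}^{-1}R_j(a)(u_{2,j}+av_js_0)$, $\mu_j:=v_j^*R_j(a)^*K_{1,j}^{-1}R_j(a)v_j$; $\mathbf l_0:=\lambda_0$, $\mathbf l_j:=\lambda_j-\lambda_{j-1}$ ($1\le j\le n-1$); $\mathbf m_0:=\mu_0$, $\mathbf m_j:=\mu_j-\mu_{j-1}$ ($1\le j\le n$). Blaschke–Potapov factors: for $0\le j\le n-1$, $d^{(2j+2)}(z):=\begin{pmatrix}I_q+(z-a)Q_{2,j}^*(a)\widehat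 H_{2,j}^{-1}P_{2,j}(a) & (z-a)Q_{2,j}^*(a)\widehat H_{2,j}^{-1}Q_{2,j}(a)\\ -(z-a)P_{2,j}^*(a)\widehat H_{2,j}^{-1}P_{2,j}(a) & I_q-(z-a)P_{2,j}^*(a)\widehat H_{2,j}^{-1}Q_{2,j}(a)\end{pmatrix}$; for $0\le j\le n$, $d^{(2j+1)}(z):=\begin{pmatrix}I_q-(z-a)\Theta_{1,j}^*(a)\widehat K_{1,j}^{-1}\Gamma_{1,j}(a) & (z-a)\Theta_{1,j}^*(a)\widehat K_{1,j}^{-1}\Theta_{1,j}(a)\\ -(z-a)\Gamma_{1,j}^*(a)\widehat K_{1,j}^{-1}\Gamma_{1,j}(a) & I_q+(z-a)\Gamma_{1,j}^*(a)\widehat K_{1,j}^{-1}\Theta_{1,j}(a)\end{pmatrix}$. Here $F^*(a)$ means $(F(a))^*$. *)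

theory Defs
  imports Complex_Main "Jordan_Normal_Form.Matrix"
begin

definition adj :: "complex mat \<Rightarrow> complex mat" where
  "adj A = mat (dim_col A) (dim_row A) (\<lambda>(i,k). cnj (A $$ (k,i)))"

text \<open>Inverse of a square matrix (meaningful when it is invertible).\<close>
definition minv :: "complex mat \<Rightarrow> complex mat" where
  "minv A = (SOME B. B \<in> carrier_mat (dim_row A) (dim_row A) \<and>
                     A * B = 1\<^sub>m (dim_row A) \<and> B * A = 1\<^sub>m (dim_row A))"

definition pos_def :: "complex mat \<Rightarrow> bool" where
  "pos_def A \<longleftrightarrow> square_mat A \<and> adj A = A \<and>
     (\<forall>v. v \<in> carrier_vec (dim_row A) \<and> v \<noteq> 0\<^sub>v (dim_row A) \<longrightarrow>
          0 < Re (map_vec cnj v \<bullet> (A *\<^sub>v v)))"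

text \<open>Block matrix with N x M blocks, each block q x q, block (l,k) given by f l k.\<close>
definition bmat :: "nat \<Rightarrow> nat \<Rightarrow> nat \<Rightarrow> (nat \<Rightarrow> nat \<Rightarrow> complex mat) \<Rightarrow> complex mat" where
  "bmat q N M f = mat (N*q) (M*q) (\<lambda>(i,k). f (i div q) (k div q) $$ (i mod q, k mod q))"

definition bcol :: "nat \<Rightarrow> nat \<Rightarrow> (nat \<Rightarrow> complex mat) \<Rightarrow> complex mat" where
  "bcol q N f = bmat q N 1 (\<lambda>l k. f l)"

text \<open>Horizontal concatenation (A, B).\<close>
definition rowcat :: "complex mat \<Rightarrow> complex mat \<Rightarrow> complex mat" where
  "rowcat A B = four_block_mat A B (0\<^sub>m 0 (dim_col A)) (0\<^sub>m 0 (dim_col B))"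

abbreviation blk2 :: "complex mat \<Rightarrow> complex mat \<Rightarrow> complex mat \<Rightarrow> complex mat \<Rightarrow> complex mat" where
  "blk2 A B C D \<equiv> four_block_mat A B C D"

definition shat :: "real \<Rightarrow> real \<Rightarrow> (nat \<Rightarrow> complex mat) \<Rightarrow> nat \<Rightarrow> complex mat" where
  "shat a b s j = (complex_of_real (-(a*b))) \<cdot>\<^sub>m s j + (complex_of_real (a+b)) \<cdot>\<^sub>m s (j+1) - s (j+2)"

definition H1 :: "nat \<Rightarrow> (nat \<Rightarrow> complex mat) \<Rightarrow> nat \<Rightarrow> complex mat" where
  "H1 q s j = bmat q (j+1) (j+1) (\<lambda>l k. s (l+k))"

definition H2 :: "nat \<Rightarrow> real \<Rightarrow> real \<Rightarrow> (nat \<Rightarrow> complex mat) \<Rightarrow> nat \<Rightarrow> complex mat" where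
  "H2 q a b s j = bmat q (j+1) (j+1) (\<lambda>l k. shat a b s (l+k))"

definition K1 :: "nat \<Rightarrow> real \<Rightarrow> (nat \<Rightarrow> complex mat) \<Rightarrow> nat \<Rightarrow> complex mat" where
  "K1 q b s j = bmat q (j+1) (j+1) (\<lambda>l k. complex_of_real b \<cdot>\<^sub>m s (l+k) - s (l+k+1))"

definition K2 :: "nat \<Rightarrow> real \<Rightarrow> (nat \<Rightarrow> complex mat) \<Rightarrow> nat \<Rightarrow> complex mat" where
  "K2 q a s j = bmat q (j+1) (j+1) (\<lambda>l k. - (complex_of_real a \<cdot>\<^sub>m s (l+k)) + s (l+k+1))"

definition Tm :: "nat \<Rightarrow> nat \<Rightarrow> complex mat" where
  "Tm q j = bmat q (j+1) (j+1) (\<lambda>l k. if l = k+1 then 1\<^sub>m q else 0\<^sub>m q q)"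

definition Rm :: "nat \<Rightarrow> nat \<Rightarrow> complex \<Rightarrow> complex mat" where
  "Rm q j z = minv (1\<^sub>m ((j+1)*q) - z \<cdot>\<^sub>m Tm q j)"

definition vv :: "nat \<Rightarrow> nat \<Rightarrow> complex mat" where
  "vv q j = bcol q (j+1) (\<lambda>l. if l = 0 then 1\<^sub>m q else 0\<^sub>m q q)"

definition u20 :: "real \<Rightarrow> real \<Rightarrow> (nat \<Rightarrow> complex mat) \<Rightarrow> complex mat" where
  "u20 a b s = - (complex_of_real (a+b) \<cdot>\<^sub>m s 0) + s 1"

definition u2 :: "nat \<Rightarrow> real \<Rightarrow> real \<Rightarrow> (nat \<Rightarrow> complex mat) \<Rightarrow> nat \<Rightarrow> complex mat" where
  "u2 q a b s j = bcol q (j+1) (\<lambda>l. if l = 0 then u20 a b s else - shat a b s (l-1))"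

definition ut1 :: "nat \<Rightarrow> real \<Rightarrow> (nat \<Rightarrow> complex mat) \<Rightarrow> nat \<Rightarrow> complex mat" where
  "ut1 q b s j = bcol q (j+1) (\<lambda>l. if l = 0 then s 0 else s l - complex_of_real b \<cdot>\<^sub>m s (l-1))"

text \<open>Y_{2,j} = col(shat_j, ..., shat_{2j-1}) (used for j >= 1).\<close>
definition Y2 :: "nat \<Rightarrow> real \<Rightarrow> real \<Rightarrow> (nat \<Rightarrow> complex mat) \<Rightarrow> nat \<Rightarrow> complex mat" where
  "Y2 q a b s j = bcol q j (\<lambda>l. shat a b s (j+l))"

text \<open>Ytilde_{1,j} = col(b s_j - s_{j+1}, ..., b s_{2j-1} - s_{2j}) (used for j >= 1).\<close>
definition Yt1 :: "nat \<Rightarrow> real \<Rightarrow> (nat \<Rightarrow> complex mat) \<Rightarrow> nat \<Rightarrow> complex mat" where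
  "Yt1 q b s j = bcol q j (\<lambda>l. complex_of_real b \<cdot>\<^sub>m s (j+l) - s (j+l+1))"

definition Hhat2 :: "nat \<Rightarrow> real \<Rightarrow> real \<Rightarrow> (nat \<Rightarrow> complex mat) \<Rightarrow> nat \<Rightarrow> complex mat" where
  "Hhat2 q a b s j = (if j = 0 then shat a b s 0
     else shat a b s (2*j) - adj (Y2 q a b s j) * minv (H2 q a b s (j-1)) * Y2 q a b s j)"

definition Khat1 :: "nat \<Rightarrow> real \<Rightarrow> (nat \<Rightarrow> complex mat) \<Rightarrow> nat \<Rightarrow> complex mat" where
  "Khat1 q b s j = (if j = 0 then complex_of_real b \<cdot>\<^sub>m s 0 - s 1
     else complex_of_real b \<cdot>\<^sub>m s (2*j) - s (2*j+1)
          - adj (Yt1 q b s j) * minv (K1 q b s (j-1)) * Yt1 q b s j)"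

definition P2 :: "nat \<Rightarrow> real \<Rightarrow> real \<Rightarrow> (nat \<Rightarrow> complex mat) \<Rightarrow> nat \<Rightarrow> complex \<Rightarrow> complex mat" where
  "P2 q a b s j z = (if j = 0 then 1\<^sub>m q
     else rowcat (- (adj (Y2 q a b s j) * minv (H2 q a b s (j-1)))) (1\<^sub>m q) * Rm q j z * vv q j)"

definition Q2 :: "nat \<Rightarrow> real \<Rightarrow> real \<Rightarrow> (nat \<Rightarrow> complex mat) \<Rightarrow> nat \<Rightarrow> complex \<Rightarrow> complex mat" where
  "Q2 q a b s j z = (if j = 0 then - (u20 a b s + z \<cdot>\<^sub>m s 0)
     else - (rowcat (- (adj (Y2 q a b s j) * minv (H2 q a b s (j-1)))) (1\<^sub>m q) * Rm q j z
             * (u2 q a b s j + z \<cdot>\<^sub>m (vv q j * s 0))))"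

definition Gam1 :: "nat \<Rightarrow> real \<Rightarrow> (nat \<Rightarrow> complex mat) \<Rightarrow> nat \<Rightarrow> complex \<Rightarrow> complex mat" where
  "Gam1 q b s j z = (if j = 0 then 1\<^sub>m q
     else rowcat (- (adj (Yt1 q b s j) * minv (K1 q b s (j-1)))) (1\<^sub>m q) * Rm q j z * vv q j)"

definition The1 :: "nat \<Rightarrow> real \<Rightarrow> (nat \<Rightarrow> complex mat) \<Rightarrow> nat \<Rightarrow> complex \<Rightarrow> complex mat" where
  "The1 q b s j z = (if j = 0 then s 0
     else rowcat (- (adj (Yt1 q b s j) * minv (K1 q b s (j-1)))) (1\<^sub>m q) * Rm q j z * ut1 q b s j)"

definition lam :: "nat \<Rightarrow> real \<Rightarrow> real \<Rightarrow> (nat \<Rightarrow> complex mat) \<Rightarrow> nat \<Rightarrow> complex mat" where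
  "lam q a b s j =
     (let w = u2 q a b s j + complex_of_real a \<cdot>\<^sub>m (vv q j * s 0);
          R = Rm q j (complex_of_real a)
      in adj w * adj R * minv (H2 q a b s j) * R * w)"

definition mu :: "nat \<Rightarrow> real \<Rightarrow> real \<Rightarrow> (nat \<Rightarrow> complex mat) \<Rightarrow> nat \<Rightarrow> complex mat" where
  "mu q a b s j =
     (let R = Rm q j (complex_of_real a)
      in adj (vv q j) * adj R * minv (K1 q b s j) * R * vv q j)"

definition lbold :: "nat \<Rightarrow> real \<Rightarrow> real \<Rightarrow> (nat \<Rightarrow> complex mat) \<Rightarrow> nat \<Rightarrow> complex mat" where
  "lbold q a b s j = (if j = 0 then lam q a b s 0 else lam q a b s j - lam q a b s (j-1))"

definition mbold :: "nat \<Rightarrow> real \<Rightarrow> real \<Rightarrow> (nat \<Rightarrow> complex mat) \<Rightarrow> nat \<Rightarrow> complex mat" where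
  "mbold q a b s j = (if j = 0 then mu q a b s 0 else mu q a b s j - mu q a b s (j-1))"

text \<open>Blaschke--Potapov factor d^{(2j+2)}.\<close>
definition deven :: "nat \<Rightarrow> real \<Rightarrow> real \<Rightarrow> (nat \<Rightarrow> complex mat) \<Rightarrow> nat \<Rightarrow> complex \<Rightarrow> complex mat" where
  "deven q a b s j z =
    (let P = P2 q a b s j (complex_of_real a); Q = Q2 q a b s j (complex_of_real a);
         Hi = minv (Hhat2 q a b s j); c = z - complex_of_real a
     in blk2 (1\<^sub>m q + c \<cdot>\<^sub>m (adj Q * Hi * P)) (c \<cdot>\<^sub>m (adj Q * Hi * Q))
             (- (c \<cdot>\<^sub>m (adj P * Hi * P))) (1\<^sub>m q - c \<cdot>\<^sub>m (adj P * Hi * Q)))"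

text \<open>Blaschke--Potapov factor d^{(2j+1)}.\<close>
definition dodd :: "nat \<Rightarrow> real \<Rightarrow> real \<Rightarrow> (nat \<Rightarrow> complex mat) \<Rightarrow> nat \<Rightarrow> complex \<Rightarrow> complex mat" where
  "dodd q a b s j z =
    (let G = Gam1 q b s j (complex_of_real a); T = The1 q b s j (complex_of_real a);
         Ki = minv (Khat1 q b s j); c = z - complex_of_real a
     in blk2 (1\<^sub>m q - c \<cdot>\<^sub>m (adj T * Ki * G)) (c \<cdot>\<^sub>m (adj T * Ki * T))
             (- (c \<cdot>\<^sub>m (adj G * Ki * G))) (1\<^sub>m q + c \<cdot>\<^sub>m (adj G * Ki * T)))"

end

theory Submission
  imports Defs "Jordan_Normal_Form.Determinant"
begin

text \<open>
  With \<open>r = \<Gamma>\<^sup>-\<^sup>1 \<Theta>\<close> (resp. \<open>t = Q\<^sup>-\<^sup>1 P\<close>) each factorisation is a purely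
  algebraic consequence of three facts: \<open>\<Gamma>\<close> (resp. \<open>Q\<close>) is invertible,
  \<open>\<Theta> \<Gamma>\<^sup>* = \<Gamma> \<Theta>\<^sup>*\<close> (resp. \<open>P Q\<^sup>* = Q P\<^sup>*\<close>), and the increment \<open>\<^bold>m\<^sub>j\<close>
  (resp. \<open>\<^bold>l\<^sub>j\<close>) equals \<open>\<Gamma>\<^sup>* S\<^sup>-\<^sup>1 \<Gamma>\<close> (resp. \<open>Q\<^sup>* S\<^sup>-\<^sup>1 Q\<close>) for the Schur
  complement \<open>S\<close> of the last block of \<open>K\<^sub>1\<^sub>,\<^sub>j\<close> (resp. \<open>H\<^sub>2\<^sub>,\<^sub>j\<close>).

  For \<open>j \<ge> 1\<close> the values at \<open>a\<close> are the row \<open>L = (-Y\<^sup>* A\<^sup>-\<^sup>1, I)\<close> of that Schur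
  complement applied to explicit block columns: \<open>R\<^sub>j(a) v\<^sub>j\<close> is the column of powers of
  \<open>a\<close>, and \<open>R\<^sub>j(a) (u\<^sub>2\<^sub>,\<^sub>j + a v\<^sub>j s\<^sub>0)\<close> is minus the first block column of
  \<open>K\<^sub>1\<^sub>,\<^sub>j\<close>. The block formula for the inverse then splits \<open>\<mu>\<^sub>j\<close> and \<open>\<lambda>\<^sub>j\<close>
  into \<open>\<mu>\<^sub>j\<^sub>-\<^sub>1\<close>, \<open>\<lambda>\<^sub>j\<^sub>-\<^sub>1\<close> plus the desired term. Invertibility and the
  symmetry relations follow from \<open>K\<^sub>1\<^sub>,\<^sub>j (I - aT\<^sub>j)\<^sup>* J = H\<^sub>2\<^sub>,\<^sub>j E\<close>, with
  \<open>J\<close> the block down shift and \<open>E\<close> the embedding of the leading block, together with the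
  definiteness of the leading sections of \<open>K\<^sub>1\<^sub>,\<^sub>n\<close> and \<open>H\<^sub>2\<^sub>,\<^sub>n\<^sub>-\<^sub>1\<close>.
\<close>

section \<open>Matrix preliminaries\<close>

lemma index_mult_mat_sum:
  assumes "A \<in> carrier_mat n m" "B \<in> carrier_mat m p" "i < n" "k < p"
  shows "(A * B) $$ (i,k) = (\<Sum>t<m. A $$ (i,t) * B $$ (t,k))"
  using assms by (auto simp: scalar_prod_def atLeast0LessThan intro!: sum.cong)

lemma assoc_mult_mat_dims: "dim_col A = dim_row B \<Longrightarrow> dim_col B = dim_row C \<Longrightarrow> A * B * C = A * (B * C)"
  by (rule assoc_mult_mat[of A "dim_row A" "dim_col A" B "dim_col B" C "dim_col C"]) auto

lemma adj_carrier[simp]: "A \<in> carrier_mat n m \<Longrightarrow> adj A \<in> carrier_mat m n"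
  by (auto simp: adj_def)

lemma adj_dims[simp]: "dim_row (adj A) = dim_col A" "dim_col (adj A) = dim_row A"
  by (auto simp: adj_def)

lemma mult_carrier_iff[simp]: "A * B \<in> carrier_mat n m \<longleftrightarrow> dim_row A = n \<and> dim_col B = m"
  by auto

lemma adj_carrier_iff[simp]: "adj A \<in> carrier_mat n m \<longleftrightarrow> dim_col A = n \<and> dim_row A = m"
  by auto

lemma adj_index[simp]: "i < dim_col A \<Longrightarrow> k < dim_row A \<Longrightarrow> adj A $$ (i,k) = cnj (A $$ (k,i))"
  by (auto simp: adj_def)

lemma adj_adj[simp]: "adj (adj A) = A"
  by (rule eq_matI) (auto simp: adj_def)

lemma adj_mult:
  assumes "A \<in> carrier_mat n m" "B \<in> carrier_mat m p"
  shows "adj (A * B) = adj B * adj A"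
proof (rule eq_matI)
  fix i k assume ik: "i < dim_row (adj B * adj A)" "k < dim_col (adj B * adj A)"
  hence i: "i < p" and k: "k < n" using assms by auto
  have "adj (A * B) $$ (i,k) = cnj ((A*B) $$ (k,i))" using assms i k by auto
  also have "\<dots> = (\<Sum>t<m. cnj (A $$ (k,t)) * cnj (B $$ (t,i)))"
    using index_mult_mat_sum[OF assms k i] by simp
  also have "\<dots> = (\<Sum>t<m. adj B $$ (i,t) * adj A $$ (t,k))"
    using assms i k by (auto intro!: sum.cong)
  also have "\<dots> = (adj B * adj A) $$ (i,k)"
    using index_mult_mat_sum[of "adj B" p m "adj A" n i k] assms i k by simp
  finally show "adj (A * B) $$ (i,k) = (adj B * adj A) $$ (i,k)" .
qed (use assms in auto)

lemma adj_mult_dims: "dim_col A = dim_row B \<Longrightarrow> adj (A * B) = adj B * adj A"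
  by (rule adj_mult[of A "dim_row A" "dim_col A" B "dim_col B"]) auto

lemma adj_add: "A \<in> carrier_mat n m \<Longrightarrow> B \<in> carrier_mat n m \<Longrightarrow> adj (A + B) = adj A + adj B"
  by (rule eq_matI) (auto simp: adj_def)

lemma adj_minus: "A \<in> carrier_mat n m \<Longrightarrow> B \<in> carrier_mat n m \<Longrightarrow> adj (A - B) = adj A - adj B"
  by (rule eq_matI) (auto simp: adj_def)

lemma adj_uminus: "adj (- A) = - adj A"
  by (rule eq_matI) (auto simp: adj_def)

lemma adj_smult: "adj (c \<cdot>\<^sub>m A) = cnj c \<cdot>\<^sub>m adj A"
  by (rule eq_matI) (auto simp: adj_def)

lemma adj_one[simp]: "adj (1\<^sub>m n) = 1\<^sub>m n"
  by (rule eq_matI) (auto simp: adj_def)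

lemma adj_zero[simp]: "adj (0\<^sub>m n m) = 0\<^sub>m m n"
  by (rule eq_matI) (auto simp: adj_def)

lemma adj_four_block:
  assumes "A \<in> carrier_mat nr1 nc1" "B \<in> carrier_mat nr1 nc2"
  "C \<in> carrier_mat nr2 nc1" "D \<in> carrier_mat nr2 nc2"
  shows "adj (four_block_mat A B C D) = four_block_mat (adj A) (adj C) (adj B) (adj D)"
  by (rule eq_matI) (use assms in \<open>auto simp: adj_def\<close>)

lemma adj_rowcat:
  assumes "A \<in> carrier_mat q m" "B \<in> carrier_mat q p"
  shows "adj (rowcat A B) = adj A @\<^sub>r adj B"
proof -
  have "adj (rowcat A B) = adj (four_block_mat A B (0\<^sub>m 0 m) (0\<^sub>m 0 p))"
    unfolding rowcat_def using assms by auto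
  also have "\<dots> = four_block_mat (adj A) (adj (0\<^sub>m 0 m)) (adj B) (adj (0\<^sub>m 0 p))"
    by (rule adj_four_block) (use assms in auto)
  also have "\<dots> = adj A @\<^sub>r adj B" unfolding append_rows_def using assms by auto
  finally show ?thesis .
qed

lemma carrier_rowcat[simp]:
  "A \<in> carrier_mat q m \<Longrightarrow> B \<in> carrier_mat q p \<Longrightarrow> rowcat A B \<in> carrier_mat q (m+p)"
  unfolding rowcat_def by auto

lemma rowcat_mult_append_rows:
  assumes "A \<in> carrier_mat q m" "B \<in> carrier_mat q p" "C \<in> carrier_mat m r" "D \<in> carrier_mat p r"
  shows "rowcat A B * (C @\<^sub>r D) = A * C + B * D"
proof -
  have e1: "rowcat A B = four_block_mat A B (0\<^sub>m 0 m) (0\<^sub>m 0 p)"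
    unfolding rowcat_def using assms by auto
  have e2: "C @\<^sub>r D = four_block_mat C (0\<^sub>m m 0) D (0\<^sub>m p 0)"
    unfolding append_rows_def using assms by auto
  have "rowcat A B * (C @\<^sub>r D) = four_block_mat (A * C + B * D) (A * 0\<^sub>m m 0 + B * 0\<^sub>m p 0)
     (0\<^sub>m 0 m * C + 0\<^sub>m 0 p * D) (0\<^sub>m 0 m * 0\<^sub>m m 0 + 0\<^sub>m 0 p * 0\<^sub>m p 0)"
    unfolding e1 e2 using assms
    by (intro mult_four_block_mat) auto
  also have "\<dots> = A * C + B * D"
    by (rule eq_matI) (use assms in auto)
  finally show ?thesis .
qed

lemma append_rows_mult:
  assumes "A \<in> carrier_mat m r" "B \<in> carrier_mat p r" "C \<in> carrier_mat r k"
  shows "(A @\<^sub>r B) * C = (A * C) @\<^sub>r (B * C)"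
proof -
  have "(A @\<^sub>r B) * C = four_block_mat A (0\<^sub>m m 0) B (0\<^sub>m p 0) * four_block_mat C (0\<^sub>m r 0) (0\<^sub>m 0 k) (0\<^sub>m 0 0)"
    unfolding append_rows_def using assms
    by (intro arg_cong2[where f="(*)"], auto)
  also have "\<dots> = four_block_mat (A * C + 0\<^sub>m m 0 * 0\<^sub>m 0 k) (A * 0\<^sub>m r 0 + 0\<^sub>m m 0 * 0\<^sub>m 0 0)
     (B * C + 0\<^sub>m p 0 * 0\<^sub>m 0 k) (B * 0\<^sub>m r 0 + 0\<^sub>m p 0 * 0\<^sub>m 0 0)"
    using assms by (intro mult_four_block_mat) auto
  also have "\<dots> = (A * C) @\<^sub>r (B * C)"
    unfolding append_rows_def by (rule eq_matI) (use assms in auto)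
  finally show ?thesis .
qed

lemma zero_row_mat_eq: "X \<in> carrier_mat 0 k \<Longrightarrow> X = 0\<^sub>m 0 k"
  by (rule eq_matI) auto

lemma append_rows_four_block: "A \<in> carrier_mat m r \<Longrightarrow> B \<in> carrier_mat p r \<Longrightarrow>
   A @\<^sub>r B = four_block_mat A (0\<^sub>m m 0) B (0\<^sub>m p 0)"
  unfolding append_rows_def by auto

lemma rowcat_four_block: "A \<in> carrier_mat q m \<Longrightarrow> B \<in> carrier_mat q p \<Longrightarrow>
   rowcat A B = four_block_mat A B (0\<^sub>m 0 m) (0\<^sub>m 0 p)"
  unfolding rowcat_def by auto

lemma four_block_mult_append_rows:
  assumes "A \<in> carrier_mat nr1 n1" "B \<in> carrier_mat nr1 n2" "C \<in> carrier_mat nr2 n1" "D \<in> carrier_mat nr2 n2"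
    "X \<in> carrier_mat n1 k" "Y \<in> carrier_mat n2 k"
  shows "four_block_mat A B C D * (X @\<^sub>r Y) = (A * X + B * Y) @\<^sub>r (C * X + D * Y)"
proof -
  have "four_block_mat A B C D * (X @\<^sub>r Y) = four_block_mat A B C D * four_block_mat X (0\<^sub>m n1 0) Y (0\<^sub>m n2 0)"
    using assms by (simp add: append_rows_four_block)
  also have "\<dots> = four_block_mat (A * X + B * Y) (A * 0\<^sub>m n1 0 + B * 0\<^sub>m n2 0) (C * X + D * Y) (C * 0\<^sub>m n1 0 + D * 0\<^sub>m n2 0)"
    by (rule mult_four_block_mat) (use assms in auto)
  also have "\<dots> = (A * X + B * Y) @\<^sub>r (C * X + D * Y)"
    unfolding append_rows_def by (rule eq_matI) (use assms in auto)
  finally show ?thesis .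
qed

lemma adj_append_rows:
  assumes "A \<in> carrier_mat m r" "B \<in> carrier_mat p r"
  shows "adj (A @\<^sub>r B) = rowcat (adj A) (adj B)"
proof -
  have "adj (A @\<^sub>r B) = adj (four_block_mat A (0\<^sub>m m 0) B (0\<^sub>m p 0))"
    using assms by (simp add: append_rows_four_block)
  also have "\<dots> = four_block_mat (adj A) (adj B) (adj (0\<^sub>m m 0)) (adj (0\<^sub>m p 0))"
    by (rule adj_four_block) (use assms in auto)
  also have "\<dots> = rowcat (adj A) (adj B)" unfolding rowcat_def using assms by auto
  finally show ?thesis .
qed

lemma append_rows_zero: "0\<^sub>m m k @\<^sub>r 0\<^sub>m p k = (0\<^sub>m (m+p) k :: complex mat)"
  unfolding append_rows_def by (rule eq_matI) auto

lemma add_diff_cancel_left_mat: "X \<in> carrier_mat n m \<Longrightarrow> Y \<in> carrier_mat n m \<Longrightarrow> (X + Y) - X = (Y :: complex mat)"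
  by (rule eq_matI) auto

lemma diff_eq_add_if_sum_zero: assumes "U \<in> carrier_mat n m" "V \<in> carrier_mat n m" "W \<in> carrier_mat n m" "U + V = 0\<^sub>m n m"
  shows "W - U = W + (V::complex mat)"
proof (rule eq_matI)
  fix i k assume ik: "i < dim_row (W + V)" "k < dim_col (W + V)"
  have "(U + V) $$ (i,k) = 0" using assms(4) ik assms by simp
  hence "U $$ (i,k) + V $$ (i,k) = 0" using ik assms(1-3) by simp
  hence "U $$ (i,k) = - V $$ (i,k)" by (simp add: eq_neg_iff_add_eq_0)
  thus "(W - U) $$ (i,k) = (W + V) $$ (i,k)" using ik assms by simp
qed (use assms in auto)

lemma add_eq_diff_if_sum_zero: assumes "U \<in> carrier_mat n m" "V \<in> carrier_mat n m" "W \<in> carrier_mat n m" "U + V = 0\<^sub>m n m"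
  shows "W + U = W - (V::complex mat)"
proof (rule eq_matI)
  fix i k assume ik: "i < dim_row (W - V)" "k < dim_col (W - V)"
  have "(U + V) $$ (i,k) = 0" using assms(4) ik assms by simp
  hence "U $$ (i,k) + V $$ (i,k) = 0" using ik assms(1-3) by simp
  hence "U $$ (i,k) = - V $$ (i,k)" by (simp add: eq_neg_iff_add_eq_0)
  thus "(W + U) $$ (i,k) = (W - V) $$ (i,k)" using ik assms by simp
qed (use assms in auto)

lemma minv_inverse:
  assumes "invertible_mat A" "A \<in> carrier_mat n n"
  shows "minv A \<in> carrier_mat n n" "A * minv A = 1\<^sub>m n" "minv A * A = 1\<^sub>m n"
proof -
  from assms obtain B where B: "A * B = 1\<^sub>m n" "B * A = 1\<^sub>m (dim_row B)"
    unfolding invertible_mat_def inverts_mat_def by auto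
  have "dim_col B = n" using arg_cong[OF B(1), of dim_col] by simp
  moreover have "dim_row B = n" using arg_cong[OF B(2), of dim_col] assms by simp
  ultimately have Bc: "B \<in> carrier_mat n n" by auto
  have ex: "\<exists>B. B \<in> carrier_mat (dim_row A) (dim_row A) \<and> A * B = 1\<^sub>m (dim_row A) \<and> B * A = 1\<^sub>m (dim_row A)"
    using B Bc assms by auto
  from someI_ex[OF ex] show "minv A \<in> carrier_mat n n" "A * minv A = 1\<^sub>m n" "minv A * A = 1\<^sub>m n"
    unfolding minv_def using assms by auto
qed

lemma minv_unique:
  assumes "invertible_mat A" "A \<in> carrier_mat n n" "B \<in> carrier_mat n n" "A * B = 1\<^sub>m n"
  shows "minv A = B"
proof -
  note m = minv_inverse[OF assms(1,2)]
  have "minv A = minv A * (A * B)" using assms m by simp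
  also have "\<dots> = (minv A * A) * B" using assms m by (metis assoc_mult_mat)
  also have "\<dots> = B" using m assms by simp
  finally show ?thesis .
qed

lemma invertible_if_det_nonzero:
  assumes "A \<in> carrier_mat n n" "det A \<noteq> 0"
  shows "invertible_mat (A :: complex mat)"
proof -
  have "A \<in> Units (ring_mat TYPE(complex) n ())" by (rule det_non_zero_imp_unit[OF assms])
  then obtain B where B: "B \<in> carrier_mat n n" "B * A = 1\<^sub>m n" "A * B = 1\<^sub>m n"
    unfolding Units_def ring_mat_def by auto
  thus ?thesis using assms unfolding invertible_mat_def inverts_mat_def by auto
qed

lemma invertible_if_trivial_kernel:
  assumes A: "A \<in> carrier_mat n n"
    and K: "\<And>X. X \<in> carrier_mat n 1 \<Longrightarrow> A * X = 0\<^sub>m n 1 \<Longrightarrow> X = 0\<^sub>m n 1"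
  shows "invertible_mat (A :: complex mat)"
proof (rule invertible_if_det_nonzero[OF A], rule notI)
  assume "det A = 0"
  then obtain v where v: "v \<in> carrier_vec n" "v \<noteq> 0\<^sub>v n" "A *\<^sub>v v = 0\<^sub>v n"
    using det_0_iff_vec_prod_zero[OF A] by auto
  let ?X = "mat_of_cols n [v]"
  have X: "?X \<in> carrier_mat n 1" by auto
  have "A * ?X = 0\<^sub>m n 1"
  proof (rule eq_matI)
    fix i k assume "i < dim_row (0\<^sub>m n 1 :: complex mat)" "k < dim_col (0\<^sub>m n 1 :: complex mat)"
    hence ik: "i < n" "k = 0" by auto
    have "(A * ?X) $$ (i,k) = row A i \<bullet> col ?X 0" using A ik by auto
    also have "col ?X 0 = v" using v by simp
    also have "row A i \<bullet> v = (A *\<^sub>v v) $ i" using A ik by auto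
    finally show "(A * ?X) $$ (i,k) = 0\<^sub>m n 1 $$ (i,k)" using v ik by simp
  qed (use A in auto)
  hence "?X = 0\<^sub>m n 1" using K X by auto
  hence "col ?X 0 = col (0\<^sub>m n 1) 0" by simp
  hence "v = 0\<^sub>v n" using v by simp
  with v show False by simp
qed

lemma invertible_mult_eq_zero:
  assumes "invertible_mat (A::complex mat)" "A \<in> carrier_mat n n" "X \<in> carrier_mat n k" "A * X = 0\<^sub>m n k"
  shows "X = 0\<^sub>m n k"
proof -
  note m = minv_inverse[OF assms(1,2)]
  have "X = (minv A * A) * X" using m assms by simp
  also have "\<dots> = minv A * (A * X)" using m assms by (metis assoc_mult_mat)
  also have "\<dots> = 0\<^sub>m n k" using assms m by simp
  finally show ?thesis .
qed

lemma adj_minv_herm: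
  assumes "invertible_mat A" "A \<in> carrier_mat n n" "adj A = A"
  shows "adj (minv A) = minv A"
proof -
  note m = minv_inverse[OF assms(1,2)]
  have e: "adj (minv A * A) = adj A * adj (minv A)"
    by (rule adj_mult) (use m assms in auto)
  have "adj (minv A * A) = 1\<^sub>m n" using m(3) by simp
  hence "A * adj (minv A) = 1\<^sub>m n" using e assms(3) by metis
  thus ?thesis using minv_unique[OF assms(1,2), of "adj (minv A)"] m by simp
qed

lemma invertible_if_adj_invertible: assumes "invertible_mat (adj G)" "G \<in> carrier_mat n n" shows "invertible_mat G"
proof -
  have c: "adj G \<in> carrier_mat n n" using assms by simp
  note m = minv_inverse[OF assms(1) c]
  have "G * adj (minv (adj G)) = 1\<^sub>m n"
    using adj_mult[OF m(1) c] m(3) by simp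
  moreover have "adj (minv (adj G)) * G = 1\<^sub>m n"
    using adj_mult[OF c m(1)] m(2) by simp
  moreover have "dim_row (adj (minv (adj G))) = n" using m(1) by simp
  ultimately show ?thesis using assms unfolding invertible_mat_def inverts_mat_def
    by (intro conjI exI[of _ "adj (minv (adj G))"]) auto
qed

lemma invertible_one_mat: "invertible_mat (1\<^sub>m q :: complex mat)"
  unfolding invertible_mat_def inverts_mat_def by (intro conjI exI[of _ "1\<^sub>m q"]) auto

lemma sum_delta_right: "c < (N::nat) \<Longrightarrow> (\<Sum>t<N. f t * (if t = c then 1 else 0)) = (f c :: 'a :: comm_semiring_1)"
proof -
  assume c: "c < N"
  have "(\<Sum>t<N. f t * (if t = c then 1 else 0)) = (\<Sum>t<N. if t = c then f t else 0)"
    by (rule sum.cong) auto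
  also have "\<dots> = f c" using c by (subst sum.delta) auto
  finally show ?thesis .
qed

lemma sum_delta_left: "c < (N::nat) \<Longrightarrow> (\<Sum>t<N. (if t = c then 1 else 0) * f t) = (f c :: 'a :: comm_semiring_1)"
  using sum_delta_right[of c N f] by (simp add: mult.commute)

lemma sum_shift_delta_left: "(\<Sum>t<(N::nat). (if i = t + (q::nat) then 1 else 0) * f t) = (if q \<le> i \<and> i - q < N then f (i - q) else (0 :: 'a :: semiring_1))"
proof -
  have "(\<Sum>t<N. (if i = t + q then 1 else 0) * f t) = (\<Sum>t<N. if t = i - q \<and> q \<le> i then f t else 0)"
    by (rule sum.cong) auto
  also have "\<dots> = (\<Sum>t<N. if t = i - q then (if q \<le> i then f t else 0) else 0)"
    by (rule sum.cong) auto
  also have "\<dots> = (if q \<le> i \<and> i - q < N then f (i - q) else 0)"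
    by (subst sum.delta) auto
  finally show ?thesis .
qed

lemma sum_shift_delta_right: "(\<Sum>t<(N::nat). f t * (if t = i + (q::nat) then 1 else 0)) = (if i + q < N then f (i + q) else (0 :: 'a :: semiring_1))"
proof -
  have "(\<Sum>t<N. f t * (if t = i + q then 1 else 0)) = (\<Sum>t<N. if t = i + q then f t else 0)"
    by (rule sum.cong) auto
  also have "\<dots> = (if i + q < N then f (i + q) else 0)" by (subst sum.delta) auto
  finally show ?thesis .
qed

lemma div_mod_eq_shift_iff: "0 < (q::nat) \<Longrightarrow> (i div q = t div q + 1 \<and> i mod q = t mod q) \<longleftrightarrow> i = t + q"
proof
  assume q: "0 < q" and h: "i div q = t div q + 1 \<and> i mod q = t mod q"
  have "i = q * (i div q) + i mod q" by simp
  also have "\<dots> = q * (t div q) + t mod q + q" using h by (simp add: algebra_simps)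
  also have "\<dots> = t + q" by simp
  finally show "i = t + q" .
next
  assume q: "0 < q" and "i = t + q"
  thus "i div q = t div q + 1 \<and> i mod q = t mod q" by simp
qed

lemma bmat_carrier[simp]: "bmat q N M f \<in> carrier_mat (N*q) (M*q)"
  by (simp add: bmat_def)

lemma bmat_dims[simp]: "dim_row (bmat q N M f) = N*q" "dim_col (bmat q N M f) = M*q"
  by (auto simp add: bmat_def)

lemma bmat_index: "i < N*q \<Longrightarrow> k < M*q \<Longrightarrow> bmat q N M f $$ (i,k) = f (i div q) (k div q) $$ (i mod q, k mod q)"
  by (simp add: bmat_def)

lemma bcol_carrier[simp]: "bcol q N f \<in> carrier_mat (N*q) q"
  by (simp add: bcol_def bmat_def)

lemma bcol_dims[simp]: "dim_row (bcol q N f) = N*q" "dim_col (bcol q N f) = q"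
  by (auto simp add: bcol_def)

lemma bcol_index: "i < N*q \<Longrightarrow> k < q \<Longrightarrow> bcol q N f $$ (i,k) = f (i div q) $$ (i mod q, k)"
  by (simp add: bcol_def bmat_def)

definition embed_mat :: "nat \<Rightarrow> nat \<Rightarrow> complex mat" where
  "embed_mat N M = mat N M (\<lambda>(i,k). if i = k then 1 else 0)"

lemma embed_mat_carrier[simp]: "embed_mat N M \<in> carrier_mat N M" by (simp add: embed_mat_def)

lemma embed_mat_dims[simp]: "dim_row (embed_mat N M) = N" "dim_col (embed_mat N M) = M" by (auto simp add: embed_mat_def)

lemma index_adj_embed_mult: assumes "B \<in> carrier_mat N p" "M \<le> N" "i < M" "k < p"
  shows "(adj (embed_mat N M) * B) $$ (i,k) = B $$ (i,k)"
proof -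
  have "(adj (embed_mat N M) * B) $$ (i,k) = (\<Sum>t<N. adj (embed_mat N M) $$ (i,t) * B $$ (t,k))"
    using assms by (intro index_mult_mat_sum[of _ M N _ p]) auto
  also have "\<dots> = (\<Sum>t<N. (if t = i then 1 else 0) * B $$ (t,k))"
    using assms by (intro sum.cong) (auto simp: embed_mat_def)
  also have "\<dots> = B $$ (i,k)" using assms by (intro sum_delta_left) auto
  finally show ?thesis .
qed

lemma index_mult_embed: assumes "B \<in> carrier_mat p N" "M \<le> N" "i < p" "k < M"
  shows "(B * embed_mat N M) $$ (i,k) = B $$ (i,k)"
proof -
  have "(B * embed_mat N M) $$ (i,k) = (\<Sum>t<N. B $$ (i,t) * embed_mat N M $$ (t,k))"
    using assms by (intro index_mult_mat_sum[of _ p N _ M]) auto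
  also have "\<dots> = (\<Sum>t<N. B $$ (i,t) * (if t = k then 1 else 0))"
    using assms by (intro sum.cong) (auto simp: embed_mat_def)
  also have "\<dots> = B $$ (i,k)" using assms by (intro sum_delta_right) auto
  finally show ?thesis .
qed

lemma index_compress_embed: assumes "B \<in> carrier_mat N N" "M \<le> N" "i < M" "k < M"
  shows "(adj (embed_mat N M) * B * embed_mat N M) $$ (i,k) = B $$ (i,k)"
proof -
  have "(adj (embed_mat N M) * B * embed_mat N M) $$ (i,k) = (adj (embed_mat N M) * B) $$ (i,k)"
  proof (rule index_mult_embed[of _ M])
    show "adj (embed_mat N M) * B \<in> carrier_mat M N" using assms by (metis embed_mat_carrier adj_carrier mult_carrier_mat)
  qed (use assms in auto)
  also have "\<dots> = B $$ (i,k)" using assms by (intro index_adj_embed_mult[of B N N M]) auto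
  finally show ?thesis .
qed

lemma adj_embed_mult_embed: assumes "M \<le> N" shows "adj (embed_mat N M) * embed_mat N M = 1\<^sub>m M"
proof (rule eq_matI)
  fix i k assume "i < dim_row (1\<^sub>m M :: complex mat)" "k < dim_col (1\<^sub>m M :: complex mat)"
  hence ik: "i < M" "k < M" by auto
  have "(adj (embed_mat N M) * embed_mat N M) $$ (i,k) = embed_mat N M $$ (i,k)"
    using assms ik by (intro index_adj_embed_mult) auto
  thus "(adj (embed_mat N M) * embed_mat N M) $$ (i,k) = 1\<^sub>m M $$ (i,k)" using assms ik by (simp add: embed_mat_def)
qed auto

lemma bmat_compress:
  assumes "M \<le> N"
  shows "adj (embed_mat (N*q) (M*q)) * bmat q N N f * embed_mat (N*q) (M*q) = bmat q M M f"
proof (rule eq_matI)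
  fix i k assume "i < dim_row (bmat q M M f)" "k < dim_col (bmat q M M f)"
  hence ik: "i < M*q" "k < M*q" by auto
  have MN: "M*q \<le> N*q" using assms by simp
  have "(adj (embed_mat (N*q) (M*q)) * bmat q N N f * embed_mat (N*q) (M*q)) $$ (i,k) = bmat q N N f $$ (i,k)"
    using ik MN by (intro index_compress_embed) auto
  also have "\<dots> = bmat q M M f $$ (i,k)"
  proof -
    have "i < N*q" "k < N*q" using ik MN by (meson less_le_trans)+
    thus ?thesis using ik by (simp add: bmat_index)
  qed
  finally show "(adj (embed_mat (N*q) (M*q)) * bmat q N N f * embed_mat (N*q) (M*q)) $$ (i,k) = bmat q M M f $$ (i,k)" .
qed auto

lemma block_div_mod: assumes "0 < (q::nat)" "j*q \<le> i" "i < j*q + q"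
  shows "i div q = j" "i mod q = i - j*q"
proof -
  obtain r where r: "i = r + j*q" "r < q" using assms by (metis add.commute le_add_diff_inverse nat_add_left_cancel_less)
  show "i div q = j" using r assms by simp
  show "i mod q = i - j*q" using r assms by simp
qed

lemma bcol_split:
  assumes "0 < q" "f j \<in> carrier_mat q q"
  shows "bcol q (j+1) f = bcol q j f @\<^sub>r f j"
proof (rule eq_matI)
  fix i k assume "i < dim_row (bcol q j f @\<^sub>r f j)" "k < dim_col (bcol q j f @\<^sub>r f j)"
  hence ik: "i < j*q + q" "k < q" using assms by (auto simp: append_rows_def)
  show "bcol q (j+1) f $$ (i,k) = (bcol q j f @\<^sub>r f j) $$ (i,k)"
  proof (cases "i < j*q")
    case True
    thus ?thesis using ik assms by (simp add: append_rows_def bcol_index)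
  next
    case False
    note d = block_div_mod[OF assms(1) _ ik(1)]
    have "bcol q (j+1) f $$ (i,k) = f j $$ (i - j*q, k)" using ik False d assms by (simp add: bcol_index)
    thus ?thesis using ik False assms by (simp add: append_rows_def)
  qed
qed (use assms in \<open>auto simp: append_rows_def\<close>)

lemma bmat_split:
  assumes "0 < q" "f j j \<in> carrier_mat q q"
  shows "bmat q (j+1) (j+1) f = four_block_mat (bmat q j j f) (bcol q j (\<lambda>l. f l j)) (bmat q 1 j (\<lambda>_ k. f j k)) (f j j)"
proof (rule eq_matI)
  fix i k assume "i < dim_row (four_block_mat (bmat q j j f) (bcol q j (\<lambda>l. f l j)) (bmat q 1 j (\<lambda>_ k. f j k)) (f j j))"
     "k < dim_col (four_block_mat (bmat q j j f) (bcol q j (\<lambda>l. f l j)) (bmat q 1 j (\<lambda>_ k. f j k)) (f j j))"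
  hence ik: "i < j*q + q" "k < j*q + q" using assms by auto
  have i1: "i < (j+1)*q" "k < (j+1)*q" using ik by (auto simp: algebra_simps)
  show "bmat q (j+1) (j+1) f $$ (i,k) = four_block_mat (bmat q j j f) (bcol q j (\<lambda>l. f l j)) (bmat q 1 j (\<lambda>_ k. f j k)) (f j j) $$ (i,k)"
  proof (cases "i < j*q")
    case iT: True
    show ?thesis
    proof (cases "k < j*q")
      case True thus ?thesis using iT ik i1 assms by (simp add: bmat_index)
    next
      case False
      note d = block_div_mod[OF assms(1) _ ik(2)]
      show ?thesis using iT False ik i1 assms d by (simp add: bmat_index bcol_index)
    qed
  next
    case iF: False
    note di = block_div_mod[OF assms(1) _ ik(1)]
    show ?thesis
    proof (cases "k < j*q")
      case True
      have "i - j*q < q" using ik iF by auto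
      thus ?thesis using iF True ik i1 assms di by (simp add: bmat_index)
    next
      case False
      note d = block_div_mod[OF assms(1) _ ik(2)]
      show ?thesis using iF False ik i1 assms d di by (simp add: bmat_index)
    qed
  qed
qed (use assms in \<open>auto simp: algebra_simps\<close>)

lemma adj_bcol:
  assumes "0 < q" "\<And>k. k < j \<Longrightarrow> g k \<in> carrier_mat q q"
  shows "adj (bcol q j g) = bmat q 1 j (\<lambda>_ k. adj (g k))"
proof (rule eq_matI)
  fix i k assume "i < dim_row (bmat q 1 j (\<lambda>_ k. adj (g k)))" "k < dim_col (bmat q 1 j (\<lambda>_ k. adj (g k)))"
  hence ik: "i < q" "k < j*q" by auto
  have kd: "k div q < j" using ik by (simp add: less_mult_imp_div_less)
  have km: "k mod q < q" using assms by simp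
  show "adj (bcol q j g) $$ (i,k) = bmat q 1 j (\<lambda>_ k. adj (g k)) $$ (i,k)"
    using ik assms(2)[OF kd] km by (simp add: bcol_index bmat_index)
qed auto

lemma bmat_1_1: assumes "0 < q" "f 0 0 \<in> carrier_mat q q" shows "bmat q 1 1 f = f 0 0"
  by (rule eq_matI) (use assms in \<open>auto simp: bmat_def\<close>)

lemma bcol_1_eq: assumes "0 < q" "f 0 \<in> carrier_mat q q" shows "bcol q 1 f = f 0"
  by (rule eq_matI) (use assms in \<open>auto simp: bcol_def bmat_def\<close>)

text \<open>Positive definiteness is only ever used through this consequence, which, unlike
  positivity, is phrased with matrix products only.\<close>
definition aniso_herm :: "nat \<Rightarrow> complex mat \<Rightarrow> bool" where
  "aniso_herm n A \<longleftrightarrow> A \<in> carrier_mat n n \<and> adj A = A \<and>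
     (\<forall>X \<in> carrier_mat n 1. adj X * A * X = 0\<^sub>m 1 1 \<longrightarrow> X = 0\<^sub>m n 1)"

lemma aniso_herm_invertible: assumes "aniso_herm n A" shows "invertible_mat A"
proof -
  have A: "A \<in> carrier_mat n n" using assms aniso_herm_def by auto
  show ?thesis
  proof (rule invertible_if_trivial_kernel[OF A])
    fix X assume X: "X \<in> carrier_mat n 1" "A * X = 0\<^sub>m n 1"
    have "adj X * A * X = adj X * (A * X)" using A X by (simp add: assoc_mult_mat[of _ 1 n _ n _ 1])
    also have "\<dots> = 0\<^sub>m 1 1" using X by simp
    finally show "X = 0\<^sub>m n 1" using assms X unfolding aniso_herm_def by auto
  qed
qed

lemma aniso_herm_congruence:
  assumes "aniso_herm n A" "P \<in> carrier_mat n m" "adj P * P = 1\<^sub>m m"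
  shows "aniso_herm m (adj P * A * P)"
proof -
  have A: "A \<in> carrier_mat n n" "adj A = A" using assms aniso_herm_def by auto
  have c: "adj P * A * P \<in> carrier_mat m m" using A assms by auto
  have h: "adj (adj P * A * P) = adj P * A * P"
  proof -
    have "adj (adj P * A * P) = adj P * adj (adj P * A)"
      by (rule adj_mult) (use A assms in auto)
    also have "adj (adj P * A) = adj A * adj (adj P)"
      by (rule adj_mult) (use A assms in auto)
    finally show ?thesis using A assms by (simp add: assoc_mult_mat[of _ m n _ n _ m])
  qed
  { fix X assume X: "X \<in> carrier_mat m 1" "adj X * (adj P * A * P) * X = 0\<^sub>m 1 1"
    have "adj (P * X) * A * (P * X) = adj X * (adj P * A * P) * X"
      using A X assms by (simp add: adj_mult[of P n m X 1] assoc_mult_mat_dims carrier_matD)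
    hence "P * X = 0\<^sub>m n 1" using X assms A unfolding aniso_herm_def by (metis mult_carrier_mat)
    hence "adj P * (P * X) = 0\<^sub>m m 1" using assms by simp
    hence "X = 0\<^sub>m m 1" using assms X by (simp add: assoc_mult_mat[symmetric, of _ m n _ m _ 1])
  }
  thus ?thesis using c h unfolding aniso_herm_def by auto
qed

lemma pos_def_aniso_herm: assumes "pos_def A" "A \<in> carrier_mat n n" shows "aniso_herm n A"
proof -
  { fix X assume X: "X \<in> carrier_mat n 1" "adj X * A * X = 0\<^sub>m 1 1"
    let ?v = "col X 0"
    have v: "?v \<in> carrier_vec n" using X by auto
    have "map_vec cnj ?v \<bullet> (A *\<^sub>v ?v) = (\<Sum>u<n. cnj (X $$ (u,0)) * (\<Sum>t<n. A $$ (u,t) * X $$ (t,0)))"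
      using X assms by (auto simp: scalar_prod_def atLeast0LessThan intro!: sum.cong)
    also have "\<dots> = (\<Sum>t<n. (\<Sum>u<n. cnj (X $$ (u,0)) * A $$ (u,t)) * X $$ (t,0))"
      by (simp add: sum_distrib_left sum_distrib_right mult.assoc) (rule sum.swap)
    also have "\<dots> = (adj X * A * X) $$ (0,0)"
    proof -
      have "(adj X * A * X) $$ (0,0) = (\<Sum>t<n. (adj X * A) $$ (0,t) * X $$ (t,0))"
        using X assms by (intro index_mult_mat_sum[of _ 1 n _ 1]) auto
      also have "\<dots> = (\<Sum>t<n. (\<Sum>u<n. cnj (X $$ (u,0)) * A $$ (u,t)) * X $$ (t,0))"
      proof (rule sum.cong[OF refl])
        fix t assume t: "t \<in> {..<n}"
        have "(adj X * A) $$ (0,t) = (\<Sum>u<n. adj X $$ (0,u) * A $$ (u,t))"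
          using X assms t by (intro index_mult_mat_sum[of _ 1 n _ n]) auto
        also have "\<dots> = (\<Sum>u<n. cnj (X $$ (u,0)) * A $$ (u,t))"
          using X by (intro sum.cong) auto
        finally show "(adj X * A) $$ (0,t) * X $$ (t,0) = (\<Sum>u<n. cnj (X $$ (u,0)) * A $$ (u,t)) * X $$ (t,0)" by simp
      qed
      finally show ?thesis by simp
    qed
    also have "\<dots> = 0" using X by simp
    finally have "map_vec cnj ?v \<bullet> (A *\<^sub>v ?v) = 0" .
    hence "?v = 0\<^sub>v n" using assms v unfolding pos_def_def by auto
    hence "X = 0\<^sub>m n 1"
    proof (intro eq_matI)
      fix i k assume h: "col X 0 = 0\<^sub>v n" "i < dim_row (0\<^sub>m n 1 :: complex mat)" "k < dim_col (0\<^sub>m n 1 :: complex mat)"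
      have "X $$ (i,0) = col X 0 $ i" using X h(2) by simp
      also have "\<dots> = 0" using h by simp
      finally show "X $$ (i,k) = 0\<^sub>m n 1 $$ (i,k)" using h X by auto
    qed (use X in auto)
  }
  thus ?thesis using assms unfolding aniso_herm_def pos_def_def by auto
qed

lemma aniso_herm_leading_block:
  assumes "aniso_herm (N*q) (bmat q N N f)" "M \<le> N"
  shows "aniso_herm (M*q) (bmat q M M f)"
proof -
  have "M*q \<le> N*q" using assms by simp
  from aniso_herm_congruence[OF assms(1) embed_mat_carrier adj_embed_mult_embed[OF this]] show ?thesis
    using bmat_compress[OF assms(2), of q f] by simp
qed

lemma unit_upper_conj_unit_lower:
  fixes r m :: "complex mat" and c :: complex
  assumes rc: "r \<in> carrier_mat q q" and mc: "m \<in> carrier_mat q q"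
  shows "blk2 (1\<^sub>m q) r (0\<^sub>m q q) (1\<^sub>m q) * blk2 (1\<^sub>m q) (0\<^sub>m q q) (- (c \<cdot>\<^sub>m m)) (1\<^sub>m q)
           * blk2 (1\<^sub>m q) (- r) (0\<^sub>m q q) (1\<^sub>m q)
       = blk2 (1\<^sub>m q - c \<cdot>\<^sub>m (r * m)) (c \<cdot>\<^sub>m (r * (m * r))) (- (c \<cdot>\<^sub>m m)) (1\<^sub>m q + c \<cdot>\<^sub>m (m * r))"
proof -
  have c1: "blk2 (1\<^sub>m q) r (0\<^sub>m q q) (1\<^sub>m q) \<in> carrier_mat (q+q) (q+q)" using rc by auto
  have c2: "blk2 (1\<^sub>m q) (0\<^sub>m q q) (- (c \<cdot>\<^sub>m m)) (1\<^sub>m q) \<in> carrier_mat (q+q) (q+q)" using mc by auto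
  have c3: "blk2 (1\<^sub>m q) (- r) (0\<^sub>m q q) (1\<^sub>m q) \<in> carrier_mat (q+q) (q+q)" using rc by auto
  have "blk2 (1\<^sub>m q) (0\<^sub>m q q) (- (c \<cdot>\<^sub>m m)) (1\<^sub>m q) * blk2 (1\<^sub>m q) (- r) (0\<^sub>m q q) (1\<^sub>m q)
     = blk2 (1\<^sub>m q * 1\<^sub>m q + 0\<^sub>m q q * 0\<^sub>m q q) (1\<^sub>m q * - r + 0\<^sub>m q q * 1\<^sub>m q)
            (- (c \<cdot>\<^sub>m m) * 1\<^sub>m q + 1\<^sub>m q * 0\<^sub>m q q) (- (c \<cdot>\<^sub>m m) * - r + 1\<^sub>m q * 1\<^sub>m q)"
    by (rule mult_four_block_mat) (use rc mc in auto)
  also have "- (c \<cdot>\<^sub>m m) * - r = c \<cdot>\<^sub>m (m * r)"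
    using rc mc by (simp add: mult_smult_assoc_mat[of m q q r q] carrier_matD)
  finally have M23: "blk2 (1\<^sub>m q) (0\<^sub>m q q) (- (c \<cdot>\<^sub>m m)) (1\<^sub>m q) * blk2 (1\<^sub>m q) (- r) (0\<^sub>m q q) (1\<^sub>m q)
      = blk2 (1\<^sub>m q) (- r) (- (c \<cdot>\<^sub>m m)) (c \<cdot>\<^sub>m (m * r) + 1\<^sub>m q)"
    using rc mc by simp
  have "blk2 (1\<^sub>m q) r (0\<^sub>m q q) (1\<^sub>m q) * blk2 (1\<^sub>m q) (- r) (- (c \<cdot>\<^sub>m m)) (c \<cdot>\<^sub>m (m * r) + 1\<^sub>m q)
      = blk2 (1\<^sub>m q * 1\<^sub>m q + r * - (c \<cdot>\<^sub>m m)) (1\<^sub>m q * - r + r * (c \<cdot>\<^sub>m (m * r) + 1\<^sub>m q))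
             (0\<^sub>m q q * 1\<^sub>m q + 1\<^sub>m q * - (c \<cdot>\<^sub>m m)) (0\<^sub>m q q * - r + 1\<^sub>m q * (c \<cdot>\<^sub>m (m * r) + 1\<^sub>m q))"
    by (rule mult_four_block_mat) (use rc mc in auto)
  also have "1\<^sub>m q * 1\<^sub>m q + r * - (c \<cdot>\<^sub>m m) = 1\<^sub>m q - c \<cdot>\<^sub>m (r * m)"
  proof -
    have "r * - (c \<cdot>\<^sub>m m) = - (c \<cdot>\<^sub>m (r * m))"
      using rc mc by (simp add: mult_smult_distrib[of r q q m q] carrier_matD)
    thus ?thesis by (intro eq_matI) (use rc mc in auto)
  qed
  also have "1\<^sub>m q * - r + r * (c \<cdot>\<^sub>m (m * r) + 1\<^sub>m q) = c \<cdot>\<^sub>m (r * (m * r))"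
  proof -
    have "r * (c \<cdot>\<^sub>m (m * r) + 1\<^sub>m q) = c \<cdot>\<^sub>m (r * (m * r)) + r"
      using rc mc by (simp add: mult_add_distrib_mat[of r q q _ q] mult_smult_distrib[of r q q _ q] carrier_matD)
    thus ?thesis by (intro eq_matI) (use rc mc in auto)
  qed
  also have "0\<^sub>m q q * 1\<^sub>m q + 1\<^sub>m q * - (c \<cdot>\<^sub>m m) = - (c \<cdot>\<^sub>m m)"
    using mc by (intro eq_matI) auto
  also have "0\<^sub>m q q * - r + 1\<^sub>m q * (c \<cdot>\<^sub>m (m * r) + 1\<^sub>m q) = 1\<^sub>m q + c \<cdot>\<^sub>m (m * r)"
    using rc mc by (intro eq_matI) auto
  finally show ?thesis unfolding assoc_mult_mat[OF c1 c2 c3] M23 .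
qed

lemma unit_lower_conj_unit_upper:
  fixes t l :: "complex mat" and c :: complex
  assumes tc: "t \<in> carrier_mat q q" and lc: "l \<in> carrier_mat q q"
  shows "blk2 (1\<^sub>m q) (0\<^sub>m q q) (- t) (1\<^sub>m q) * blk2 (1\<^sub>m q) (c \<cdot>\<^sub>m l) (0\<^sub>m q q) (1\<^sub>m q)
           * blk2 (1\<^sub>m q) (0\<^sub>m q q) t (1\<^sub>m q)
       = blk2 (1\<^sub>m q + c \<cdot>\<^sub>m (l * t)) (c \<cdot>\<^sub>m l) (- (c \<cdot>\<^sub>m (t * (l * t)))) (1\<^sub>m q - c \<cdot>\<^sub>m (t * l))"
proof -
  have c1: "blk2 (1\<^sub>m q) (0\<^sub>m q q) (- t) (1\<^sub>m q) \<in> carrier_mat (q+q) (q+q)" using tc by auto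
  have c2: "blk2 (1\<^sub>m q) (c \<cdot>\<^sub>m l) (0\<^sub>m q q) (1\<^sub>m q) \<in> carrier_mat (q+q) (q+q)" using lc by auto
  have c3: "blk2 (1\<^sub>m q) (0\<^sub>m q q) t (1\<^sub>m q) \<in> carrier_mat (q+q) (q+q)" using tc by auto
  have "blk2 (1\<^sub>m q) (c \<cdot>\<^sub>m l) (0\<^sub>m q q) (1\<^sub>m q) * blk2 (1\<^sub>m q) (0\<^sub>m q q) t (1\<^sub>m q)
     = blk2 (1\<^sub>m q * 1\<^sub>m q + c \<cdot>\<^sub>m l * t) (1\<^sub>m q * 0\<^sub>m q q + c \<cdot>\<^sub>m l * 1\<^sub>m q)
            (0\<^sub>m q q * 1\<^sub>m q + 1\<^sub>m q * t) (0\<^sub>m q q * 0\<^sub>m q q + 1\<^sub>m q * 1\<^sub>m q)"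
    by (rule mult_four_block_mat) (use tc lc in auto)
  also have "c \<cdot>\<^sub>m l * t = c \<cdot>\<^sub>m (l * t)" by (rule mult_smult_assoc_mat[OF lc tc])
  finally have M23: "blk2 (1\<^sub>m q) (c \<cdot>\<^sub>m l) (0\<^sub>m q q) (1\<^sub>m q) * blk2 (1\<^sub>m q) (0\<^sub>m q q) t (1\<^sub>m q)
      = blk2 (1\<^sub>m q + c \<cdot>\<^sub>m (l * t)) (c \<cdot>\<^sub>m l) t (1\<^sub>m q)"
    using tc lc by simp
  have "blk2 (1\<^sub>m q) (0\<^sub>m q q) (- t) (1\<^sub>m q) * blk2 (1\<^sub>m q + c \<cdot>\<^sub>m (l * t)) (c \<cdot>\<^sub>m l) t (1\<^sub>m q)
      = blk2 (1\<^sub>m q * (1\<^sub>m q + c \<cdot>\<^sub>m (l * t)) + 0\<^sub>m q q * t) (1\<^sub>m q * (c \<cdot>\<^sub>m l) + 0\<^sub>m q q * 1\<^sub>m q)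
             (- t * (1\<^sub>m q + c \<cdot>\<^sub>m (l * t)) + 1\<^sub>m q * t) (- t * (c \<cdot>\<^sub>m l) + 1\<^sub>m q * 1\<^sub>m q)"
    by (rule mult_four_block_mat) (use tc lc in auto)
  also have "1\<^sub>m q * (1\<^sub>m q + c \<cdot>\<^sub>m (l * t)) + 0\<^sub>m q q * t = 1\<^sub>m q + c \<cdot>\<^sub>m (l * t)"
    using tc lc by (intro eq_matI) auto
  also have "1\<^sub>m q * (c \<cdot>\<^sub>m l) + 0\<^sub>m q q * 1\<^sub>m q = c \<cdot>\<^sub>m l"
    using lc by (intro eq_matI) auto
  also have "- t * (1\<^sub>m q + c \<cdot>\<^sub>m (l * t)) + 1\<^sub>m q * t = - (c \<cdot>\<^sub>m (t * (l * t)))"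
  proof -
    have "- t * (1\<^sub>m q + c \<cdot>\<^sub>m (l * t)) = - (t + c \<cdot>\<^sub>m (t * (l * t)))"
      using tc lc by (simp add: mult_add_distrib_mat[of t q q _ q] mult_smult_distrib[of t q q _ q] carrier_matD)
    thus ?thesis by (intro eq_matI) (use tc lc in auto)
  qed
  also have "- t * (c \<cdot>\<^sub>m l) + 1\<^sub>m q * 1\<^sub>m q = 1\<^sub>m q - c \<cdot>\<^sub>m (t * l)"
  proof -
    have "- t * (c \<cdot>\<^sub>m l) = - (c \<cdot>\<^sub>m (t * l))"
      using tc lc by (simp add: mult_smult_distrib[of t q q l q] carrier_matD)
    thus ?thesis by (intro eq_matI) (use tc lc in auto)
  qed
  finally show ?thesis unfolding assoc_mult_mat[OF c1 c2 c3] M23 .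
qed

text \<open>The symmetry of \<open>T * adj G\<close> is what makes \<open>r * (m * r)\<close> collapse to \<open>adj T * Ki * T\<close>.\<close>

lemma block_conj_upper:
  fixes G T Ki m :: "complex mat" and c :: complex
  assumes G: "G \<in> carrier_mat q q" and T: "T \<in> carrier_mat q q" and Ki: "Ki \<in> carrier_mat q q"
    and Ginv: "invertible_mat G" and m: "m = adj G * Ki * G" and TG: "T * adj G = G * adj T"
  shows "blk2 (1\<^sub>m q - c \<cdot>\<^sub>m (adj T * Ki * G)) (c \<cdot>\<^sub>m (adj T * Ki * T))
             (- (c \<cdot>\<^sub>m (adj G * Ki * G))) (1\<^sub>m q + c \<cdot>\<^sub>m (adj G * Ki * T))
       = blk2 (1\<^sub>m q) (minv G * T) (0\<^sub>m q q) (1\<^sub>m q)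
         * blk2 (1\<^sub>m q) (0\<^sub>m q q) (- (c \<cdot>\<^sub>m m)) (1\<^sub>m q)
         * blk2 (1\<^sub>m q) (- (minv G * T)) (0\<^sub>m q q) (1\<^sub>m q)"
proof -
  note Gi = minv_inverse[OF Ginv G]
  define r where "r = minv G * T"
  have rc: "r \<in> carrier_mat q q" unfolding r_def using Gi T by auto
  have mc: "m \<in> carrier_mat q q" unfolding m using G Ki by auto
  have Gd: "dim_row G = q" "dim_col G = q" "dim_row T = q" "dim_col T = q" "dim_row Ki = q" "dim_col Ki = q"
    "dim_row (minv G) = q" "dim_col (minv G) = q" using G T Ki Gi by auto
  have rm: "r * m = adj T * Ki * G"
  proof -
    have "r * m = minv G * (T * adj G) * Ki * G" unfolding r_def m using Gd by (simp add: assoc_mult_mat_dims)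
    also have "\<dots> = (minv G * G) * adj T * Ki * G" unfolding TG using Gd by (simp add: assoc_mult_mat_dims)
    finally show ?thesis using Gi Gd by simp
  qed
  have mr: "m * r = adj G * Ki * T"
  proof -
    have "m * r = adj G * Ki * (G * minv G) * T" unfolding r_def m using Gd by (simp add: assoc_mult_mat_dims)
    thus ?thesis using Gi Gd by simp
  qed
  have rmr: "r * (m * r) = adj T * Ki * T"
  proof -
    have "r * (m * r) = (r * m) * r" using rc mc by (simp add: assoc_mult_mat_dims carrier_matD)
    also have "\<dots> = (adj T * Ki * G) * r" unfolding rm ..
    also have "\<dots> = adj T * Ki * (G * minv G) * T" unfolding r_def using Gd by (simp add: assoc_mult_mat_dims)
    finally show ?thesis using Gi Gd by simp
  qed
  show ?thesis unfolding m[symmetric] r_def[symmetric] unit_upper_conj_unit_lower[OF rc mc]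
    unfolding rmr unfolding rm mr ..
qed

lemma block_conj_lower:
  fixes P Q Hi l :: "complex mat" and c :: complex
  assumes P: "P \<in> carrier_mat q q" and Q: "Q \<in> carrier_mat q q" and Hi: "Hi \<in> carrier_mat q q"
    and Qinv: "invertible_mat Q" and l: "l = adj Q * Hi * Q" and PQ: "P * adj Q = Q * adj P"
  shows "blk2 (1\<^sub>m q + c \<cdot>\<^sub>m (adj Q * Hi * P)) (c \<cdot>\<^sub>m (adj Q * Hi * Q))
             (- (c \<cdot>\<^sub>m (adj P * Hi * P))) (1\<^sub>m q - c \<cdot>\<^sub>m (adj P * Hi * Q))
       = blk2 (1\<^sub>m q) (0\<^sub>m q q) (- (minv Q * P)) (1\<^sub>m q)
         * blk2 (1\<^sub>m q) (c \<cdot>\<^sub>m l) (0\<^sub>m q q) (1\<^sub>m q)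
         * blk2 (1\<^sub>m q) (0\<^sub>m q q) (minv Q * P) (1\<^sub>m q)"
proof -
  note Qi = minv_inverse[OF Qinv Q]
  define t where "t = minv Q * P"
  have tc: "t \<in> carrier_mat q q" unfolding t_def using Qi P by auto
  have lc: "l \<in> carrier_mat q q" unfolding l using Q Hi by auto
  have Gd: "dim_row P = q" "dim_col P = q" "dim_row Q = q" "dim_col Q = q" "dim_row Hi = q" "dim_col Hi = q"
    "dim_row (minv Q) = q" "dim_col (minv Q) = q" using P Q Hi Qi by auto
  have lt: "l * t = adj Q * Hi * P"
  proof -
    have "l * t = adj Q * Hi * (Q * minv Q) * P" unfolding t_def l using Gd by (simp add: assoc_mult_mat_dims)
    thus ?thesis using Qi Gd by simp
  qed
  have tl: "t * l = adj P * Hi * Q"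
  proof -
    have "t * l = minv Q * (P * adj Q) * Hi * Q" unfolding t_def l using Gd by (simp add: assoc_mult_mat_dims)
    also have "\<dots> = (minv Q * Q) * adj P * Hi * Q" unfolding PQ using Gd by (simp add: assoc_mult_mat_dims)
    finally show ?thesis using Qi Gd by simp
  qed
  have tlt: "t * (l * t) = adj P * Hi * P"
  proof -
    have "t * (l * t) = (t * l) * t" using tc lc by (simp add: assoc_mult_mat_dims carrier_matD)
    also have "\<dots> = (adj P * Hi * Q) * t" unfolding tl ..
    also have "\<dots> = adj P * Hi * (Q * minv Q) * P" unfolding t_def using Gd by (simp add: assoc_mult_mat_dims)
    finally show ?thesis using Qi Gd by simp
  qed
  show ?thesis unfolding l[symmetric] t_def[symmetric] unit_lower_conj_unit_upper[OF tc lc]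
    unfolding tlt unfolding lt tl ..
qed

subsection \<open>Schur complements\<close>

locale schur_complement =
  fixes n q :: nat and A Y C :: "complex mat"
  assumes A_carrier: "A \<in> carrier_mat n n" and Y_carrier: "Y \<in> carrier_mat n q"
    and C_carrier: "C \<in> carrier_mat q q" and C_herm: "adj C = C"
    and aniso_M: "aniso_herm (n+q) (four_block_mat A Y (adj Y) C)"
    and aniso_A: "aniso_herm n A"
begin

abbreviation M :: "complex mat" where "M \<equiv> four_block_mat A Y (adj Y) C"

abbreviation S :: "complex mat" where "S \<equiv> C - adj Y * minv A * Y"

abbreviation L :: "complex mat" where "L \<equiv> rowcat (- (adj Y * minv A)) (1\<^sub>m q)"

lemma A_invertible: "invertible_mat A"
  by (rule aniso_herm_invertible[OF aniso_A])

lemmas minv_A = minv_inverse[OF A_invertible A_carrier]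

lemma M_carrier: "M \<in> carrier_mat (n+q) (n+q)"
  using A_carrier Y_carrier C_carrier by auto

lemma M_herm: "adj M = M"
  using A_carrier Y_carrier C_carrier C_herm aniso_A
  by (simp add: adj_four_block[of A n n Y q "adj Y" q C] aniso_herm_def)

lemma M_invertible: "invertible_mat M"
  by (rule aniso_herm_invertible[OF aniso_M])

lemma S_carrier: "S \<in> carrier_mat q q"
  using A_carrier Y_carrier C_carrier minv_A by auto

lemma L_carrier: "L \<in> carrier_mat q (n+q)"
  by (rule carrier_rowcat) (use Y_carrier minv_A in auto)

lemma adj_L_carrier: "adj L \<in> carrier_mat (n+q) q"
  using L_carrier by simp

lemma L_mult_M: "L * M = rowcat (0\<^sub>m q n) S"
proof -
  define P where "P = - (adj Y * minv A)"
  have Pc: "P \<in> carrier_mat q n" unfolding P_def using minv_A Y_carrier by auto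
  note dims = A_carrier Y_carrier C_carrier
  have "L * M = four_block_mat P (1\<^sub>m q) (0\<^sub>m 0 n) (0\<^sub>m 0 q) * M"
    unfolding P_def using rowcat_four_block Pc[unfolded P_def] one_carrier_mat by metis
  also have "\<dots> = four_block_mat (P * A + 1\<^sub>m q * adj Y) (P * Y + 1\<^sub>m q * C)
      (0\<^sub>m 0 n * A + 0\<^sub>m 0 q * adj Y) (0\<^sub>m 0 n * Y + 0\<^sub>m 0 q * C)"
    by (rule mult_four_block_mat) (use Pc dims in auto)
  also have "P * A + 1\<^sub>m q * adj Y = 0\<^sub>m q n"
  proof -
    have "P * A = - (adj Y * (minv A * A))" unfolding P_def using dims minv_A
      by (simp add: assoc_mult_mat_dims carrier_matD)
    also have "\<dots> = - adj Y" using minv_A Y_carrier by simp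
    finally show ?thesis using Y_carrier by simp
  qed
  also have "P * Y + 1\<^sub>m q * C = S"
  proof -
    have "P * Y = - (adj Y * minv A * Y)" unfolding P_def using Y_carrier minv_A by (simp add: carrier_matD)
    moreover have "adj Y * minv A * Y \<in> carrier_mat q q" using Y_carrier minv_A by auto
    ultimately show ?thesis using C_carrier
      by (simp add: add_uminus_minus_mat[symmetric] comm_add_mat[of _ q q])
  qed
  also have "0\<^sub>m 0 n * A + 0\<^sub>m 0 q * adj Y = 0\<^sub>m 0 n" by (rule zero_row_mat_eq) (use dims in auto)
  also have "0\<^sub>m 0 n * Y + 0\<^sub>m 0 q * C = 0\<^sub>m 0 q" by (rule zero_row_mat_eq) (use dims in auto)
  finally show ?thesis using rowcat_four_block[OF zero_carrier_mat S_carrier] by simp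
qed

lemma S_herm: "adj S = S"
proof -
  have Aih: "adj (minv A) = minv A"
    using adj_minv_herm[OF A_invertible A_carrier] aniso_A by (auto simp: aniso_herm_def)
  have "adj (adj Y * minv A * Y) = adj Y * adj (adj Y * minv A)"
    by (rule adj_mult) (use Y_carrier minv_A in auto)
  also have "adj (adj Y * minv A) = adj (minv A) * adj (adj Y)"
    by (rule adj_mult) (use Y_carrier minv_A in auto)
  finally have "adj (adj Y * minv A * Y) = adj Y * minv A * Y"
    using Aih Y_carrier minv_A by (simp add: assoc_mult_mat_dims carrier_matD)
  moreover have "adj Y * minv A * Y \<in> carrier_mat q q" using Y_carrier minv_A by auto
  ultimately show ?thesis using C_carrier C_herm by (simp add: adj_minus[of _ q q])
qed

lemma M_mult_adj_L: "M * adj L = 0\<^sub>m n q @\<^sub>r S"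
proof -
  have "M * adj L = adj (L * M)" using adj_mult[OF L_carrier M_carrier] M_herm by simp
  also have "\<dots> = 0\<^sub>m n q @\<^sub>r adj S"
    unfolding L_mult_M using adj_rowcat[OF zero_carrier_mat S_carrier] by simp
  finally show ?thesis using S_herm by simp
qed

lemma adj_L: "adj L = adj (- (adj Y * minv A)) @\<^sub>r 1\<^sub>m q"
proof -
  have "- (adj Y * minv A) \<in> carrier_mat q n" using Y_carrier minv_A by auto
  from adj_rowcat[OF this one_carrier_mat] show ?thesis by simp
qed

lemma last_rows_adj_L: "rowcat (0\<^sub>m q n) (1\<^sub>m q) * adj L = 1\<^sub>m q"
proof -
  have c: "adj (- (adj Y * minv A)) \<in> carrier_mat n q" using Y_carrier minv_A by auto
  show ?thesis unfolding adj_L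
    using rowcat_mult_append_rows[OF zero_carrier_mat one_carrier_mat c one_carrier_mat]
      left_mult_zero_mat[OF c, of q] by simp
qed

lemma adj_L_injective:
  assumes "X \<in> carrier_mat q k" "adj L * X = 0\<^sub>m (n+q) k"
  shows "X = 0\<^sub>m q k"
proof -
  have E: "rowcat (0\<^sub>m q n) (1\<^sub>m q) \<in> carrier_mat q (n+q)" by (rule carrier_rowcat) auto
  have "X = (rowcat (0\<^sub>m q n) (1\<^sub>m q) * adj L) * X" using last_rows_adj_L assms by simp
  also have "\<dots> = rowcat (0\<^sub>m q n) (1\<^sub>m q) * (adj L * X)"
    by (rule assoc_mult_mat[of _ q "n+q" _ q _ k]) (use E L_carrier assms in auto)
  finally show ?thesis using assms(2) E by simp
qed

lemma S_invertible: "invertible_mat S"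
proof (rule invertible_if_trivial_kernel[OF S_carrier])
  fix X assume X: "X \<in> carrier_mat q 1" "S * X = 0\<^sub>m q 1"
  have adjLc: "adj L \<in> carrier_mat (n+q) q" using L_carrier by simp
  have "M * (adj L * X) = (M * adj L) * X"
    using M_carrier adjLc X by (simp add: assoc_mult_mat_dims carrier_matD)
  also have "\<dots> = (0\<^sub>m n q * X) @\<^sub>r (S * X)"
    unfolding M_mult_adj_L by (rule append_rows_mult) (use S_carrier X in auto)
  also have "\<dots> = 0\<^sub>m (n+q) 1" using X append_rows_zero[of n 1 q] by simp
  finally have "adj L * X = 0\<^sub>m (n+q) 1"
    using invertible_mult_eq_zero[OF M_invertible M_carrier, of "adj L * X" 1] adjLc X by auto
  thus "X = 0\<^sub>m q 1" by (rule adj_L_injective[OF X(1)])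
qed

lemmas minv_S = minv_inverse[OF S_invertible S_carrier]

lemma minv_M: "minv M = four_block_mat (minv A) (0\<^sub>m n q) (0\<^sub>m q n) (0\<^sub>m q q) + adj L * minv S * L"
  (is "_ = ?D + ?F")
proof (rule minv_unique[OF M_invertible M_carrier])
  define P where "P = - (adj Y * minv A)"
  have Pc: "P \<in> carrier_mat q n" unfolding P_def using minv_A Y_carrier by auto
  have Dc: "?D \<in> carrier_mat (n+q) (n+q)" using minv_A by auto
  have Fc: "?F \<in> carrier_mat (n+q) (n+q)" using L_carrier minv_S by auto
  show "?D + ?F \<in> carrier_mat (n+q) (n+q)" using Dc Fc by simp
  have e1: "M * ?D = four_block_mat (1\<^sub>m n) (0\<^sub>m n q) (adj Y * minv A) (0\<^sub>m q q)"
  proof -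
    have "M * ?D = four_block_mat (A * minv A + Y * 0\<^sub>m q n) (A * 0\<^sub>m n q + Y * 0\<^sub>m q q)
       (adj Y * minv A + C * 0\<^sub>m q n) (adj Y * 0\<^sub>m n q + C * 0\<^sub>m q q)"
      by (rule mult_four_block_mat) (use A_carrier Y_carrier C_carrier minv_A in auto)
    moreover have "adj Y * minv A + 0\<^sub>m q n = adj Y * minv A"
      by (rule right_add_zero_mat) (use Y_carrier minv_A in auto)
    ultimately show ?thesis using A_carrier Y_carrier C_carrier minv_A by simp
  qed
  have e2: "M * ?F = four_block_mat (0\<^sub>m n n) (0\<^sub>m n q) P (1\<^sub>m q)"
  proof -
    have "M * ?F = ((M * adj L) * minv S) * L"
      using M_carrier adj_L_carrier L_carrier minv_S by (simp add: assoc_mult_mat_dims carrier_matD)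
    also have "(M * adj L) * minv S = 0\<^sub>m n q @\<^sub>r 1\<^sub>m q"
    proof -
      have "(M * adj L) * minv S = (0\<^sub>m n q * minv S) @\<^sub>r (S * minv S)"
        unfolding M_mult_adj_L by (rule append_rows_mult) (use S_carrier minv_S in auto)
      thus ?thesis using minv_S by simp
    qed
    also have "(0\<^sub>m n q @\<^sub>r 1\<^sub>m q) * L = four_block_mat (0\<^sub>m n q) (0\<^sub>m n 0) (1\<^sub>m q) (0\<^sub>m q 0)
        * four_block_mat P (1\<^sub>m q) (0\<^sub>m 0 n) (0\<^sub>m 0 q)"
      unfolding P_def[symmetric] using rowcat_four_block[OF Pc one_carrier_mat]
        append_rows_four_block[where 'a=complex, OF zero_carrier_mat one_carrier_mat, of n q] by simp
    also have "\<dots> = four_block_mat (0\<^sub>m n q * P + 0\<^sub>m n 0 * 0\<^sub>m 0 n) (0\<^sub>m n q * 1\<^sub>m q + 0\<^sub>m n 0 * 0\<^sub>m 0 q)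
        (1\<^sub>m q * P + 0\<^sub>m q 0 * 0\<^sub>m 0 n) (1\<^sub>m q * 1\<^sub>m q + 0\<^sub>m q 0 * 0\<^sub>m 0 q)"
      by (rule mult_four_block_mat) (use Pc in auto)
    also have "\<dots> = four_block_mat (0\<^sub>m n n) (0\<^sub>m n q) P (1\<^sub>m q)" using Pc by simp
    finally show ?thesis .
  qed
  have "M * (?D + ?F) = M * ?D + M * ?F" by (rule mult_add_distrib_mat[OF M_carrier Dc Fc])
  also have "\<dots> = four_block_mat (1\<^sub>m n + 0\<^sub>m n n) (0\<^sub>m n q + 0\<^sub>m n q) (adj Y * minv A + P) (0\<^sub>m q q + 1\<^sub>m q)"
    unfolding e1 e2 by (rule add_four_block_mat) (use Pc Y_carrier minv_A in auto)
  also have "adj Y * minv A + P = 0\<^sub>m q n"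
  proof -
    have X: "adj Y * minv A \<in> carrier_mat q n" using Y_carrier minv_A by auto
    show ?thesis unfolding P_def using add_uminus_minus_mat[OF X X] minus_r_inv_mat[OF X] by simp
  qed
  finally show "M * (?D + ?F) = 1\<^sub>m (n+q)" by simp
qed

text \<open>This is how the parameters \<open>\<lambda>\<^sub>j\<close> and \<open>\<mu>\<^sub>j\<close> telescope.\<close>

lemma quadratic_form_minv_M:
  assumes z: "z1 \<in> carrier_mat n p" "z2 \<in> carrier_mat q p"
  shows "adj (z1 @\<^sub>r z2) * minv M * (z1 @\<^sub>r z2)
       = adj z1 * minv A * z1 + adj (L * (z1 @\<^sub>r z2)) * minv S * (L * (z1 @\<^sub>r z2))"
proof -
  let ?z = "z1 @\<^sub>r z2"
  let ?D = "four_block_mat (minv A) (0\<^sub>m n q) (0\<^sub>m q n) (0\<^sub>m q q)"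
  let ?F = "adj L * minv S * L"
  have zc: "?z \<in> carrier_mat (n+q) p" using z by auto
  have Dc: "?D \<in> carrier_mat (n+q) (n+q)" using minv_A by auto
  have Fc: "?F \<in> carrier_mat (n+q) (n+q)" using L_carrier minv_S by auto
  have azc: "adj ?z \<in> carrier_mat p (n+q)" using zc by simp
  have "adj ?z * minv M * ?z = (adj ?z * ?D + adj ?z * ?F) * ?z"
    unfolding minv_M using mult_add_distrib_mat[OF azc Dc Fc] by simp
  also have "\<dots> = adj ?z * ?D * ?z + adj ?z * ?F * ?z"
    by (rule add_mult_distrib_mat[OF mult_carrier_mat[OF azc Dc] mult_carrier_mat[OF azc Fc] zc])
  also have "\<dots> = adj ?z * (?D * ?z) + adj ?z * (?F * ?z)"
    using assoc_mult_mat[OF azc Dc zc] assoc_mult_mat[OF azc Fc zc] by simp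
  also have "?D * ?z = (minv A * z1 + 0\<^sub>m n q * z2) @\<^sub>r (0\<^sub>m q n * z1 + 0\<^sub>m q q * z2)"
    by (rule four_block_mult_append_rows) (use minv_A z in auto)
  also have "\<dots> = (minv A * z1) @\<^sub>r 0\<^sub>m q p" using minv_A z by simp
  also have "adj ?z * ((minv A * z1) @\<^sub>r 0\<^sub>m q p) = adj z1 * (minv A * z1) + adj z2 * 0\<^sub>m q p"
    unfolding adj_append_rows[OF z] by (rule rowcat_mult_append_rows) (use z minv_A in auto)
  also have "adj z2 * 0\<^sub>m q p = 0\<^sub>m p p" using z by simp
  also have "adj z1 * (minv A * z1) + 0\<^sub>m p p = adj z1 * minv A * z1"
    using z minv_A by (simp add: assoc_mult_mat_dims carrier_matD)
  also have "adj ?z * (?F * ?z) = adj (L * ?z) * minv S * (L * ?z)"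
    using adj_mult[OF L_carrier zc] zc L_carrier minv_S by (simp add: assoc_mult_mat_dims carrier_matD)
  finally show ?thesis .
qed

lemma L_M_top_zero: "L * M * (1\<^sub>m n @\<^sub>r 0\<^sub>m q n) = 0\<^sub>m q n"
proof -
  have "L * M * (1\<^sub>m n @\<^sub>r 0\<^sub>m q n) = 0\<^sub>m q n * 1\<^sub>m n + S * 0\<^sub>m q n"
    unfolding L_mult_M by (rule rowcat_mult_append_rows) (use S_carrier in auto)
  thus ?thesis using right_mult_zero_mat[OF S_carrier] by simp
qed

end

lemma hankel_four_block:
  fixes m :: "nat \<Rightarrow> complex mat"
  assumes q: "0 < q" and mc: "\<And>l. l \<le> 2*j \<Longrightarrow> m l \<in> carrier_mat q q \<and> adj (m l) = m l"
  shows "bmat q (j+1) (j+1) (\<lambda>l k. m (l+k))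
       = four_block_mat (bmat q j j (\<lambda>l k. m (l+k))) (bcol q j (\<lambda>l. m (j+l)))
           (adj (bcol q j (\<lambda>l. m (j+l)))) (m (2*j))"
proof -
  have adjY: "adj (bcol q j (\<lambda>l. m (j+l))) = bmat q 1 j (\<lambda>_ k. m (j+k))"
  proof -
    have "adj (bcol q j (\<lambda>l. m (j+l))) = bmat q 1 j (\<lambda>_ k. adj (m (j+k)))"
      by (rule adj_bcol[OF q]) (use mc in auto)
    also have "\<dots> = bmat q 1 j (\<lambda>_ k. m (j+k))"
    proof -
      have "\<And>k. k < j \<Longrightarrow> adj (m (j+k)) = m (j+k)" using mc by auto
      thus ?thesis unfolding bmat_def by (intro eq_matI) (auto simp: less_mult_imp_div_less)
    qed
    finally show ?thesis .
  qed
  have "bmat q (j+1) (j+1) (\<lambda>l k. m (l+k)) = four_block_mat (bmat q j j (\<lambda>l k. m (l+k)))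
     (bcol q j (\<lambda>l. m (l+j))) (bmat q 1 j (\<lambda>_ k. m (j+k))) (m (j+j))"
    by (rule bmat_split[OF q]) (use mc[of "j+j"] in auto)
  thus ?thesis unfolding adjY by (simp add: add.commute mult_2)
qed

lemma hankel_schur_complement:
  fixes m :: "nat \<Rightarrow> complex mat"
  assumes q: "0 < q" and mc: "\<And>l. l \<le> 2*j \<Longrightarrow> m l \<in> carrier_mat q q \<and> adj (m l) = m l"
    and aniso: "aniso_herm ((j+1)*q) (bmat q (j+1) (j+1) (\<lambda>l k. m (l+k)))"
  shows "schur_complement (j*q) q (bmat q j j (\<lambda>l k. m (l+k))) (bcol q j (\<lambda>l. m (j+l))) (m (2*j))"
proof
  show "bmat q j j (\<lambda>l k. m (l+k)) \<in> carrier_mat (j*q) (j*q)"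
    and "bcol q j (\<lambda>l. m (j+l)) \<in> carrier_mat (j*q) q" by simp_all
  show "m (2*j) \<in> carrier_mat q q" "adj (m (2*j)) = m (2*j)" using mc[of "2*j"] by auto
  show "aniso_herm (j*q) (bmat q j j (\<lambda>l k. m (l+k)))"
    by (rule aniso_herm_leading_block[OF aniso]) simp
  have "(j+1)*q = j*q + q" by simp
  with aniso show "aniso_herm (j*q + q) (four_block_mat (bmat q j j (\<lambda>l k. m (l+k)))
      (bcol q j (\<lambda>l. m (j+l))) (adj (bcol q j (\<lambda>l. m (j+l)))) (m (2*j)))"
    by (simp only: hankel_four_block[where m=m and j=j, OF q mc])
qed

section \<open>The Hankel matrices of the moment problem\<close>

lemma Tm_index: assumes "0 < q" "i < (j+1)*q" "t < (j+1)*q"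
  shows "Tm q j $$ (i,t) = (if i = t + q then 1 else 0)"
proof -
  have m: "i mod q < q" "t mod q < q" using assms by auto
  have "Tm q j $$ (i,t) = (if i div q = t div q + 1 then 1\<^sub>m q else 0\<^sub>m q q) $$ (i mod q, t mod q)"
    unfolding Tm_def using assms by (simp only: bmat_index)
  also have "\<dots> = (if i div q = t div q + 1 \<and> i mod q = t mod q then 1 else 0)"
    using m by auto
  also have "\<dots> = (if i = t + q then 1 else 0)" using div_mod_eq_shift_iff[OF assms(1)] by simp
  finally show ?thesis .
qed

lemma Tm_carrier[simp]: "Tm q j \<in> carrier_mat ((j+1)*q) ((j+1)*q)"
  unfolding Tm_def bmat_def by simp

lemma vv_carrier[simp]: "vv q j \<in> carrier_mat ((j+1)*q) q"
  unfolding vv_def bcol_def bmat_def by simp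

lemma vv_index: assumes "0 < q" "i < (j+1)*q" "k < q"
  shows "vv q j $$ (i,k) = (if i = k then 1 else 0)"
proof -
  have "vv q j $$ (i,k) = (if i div q = 0 then 1\<^sub>m q else 0\<^sub>m q q) $$ (i mod q, k)"
    unfolding vv_def using assms by (simp only: bcol_index)
  also have "\<dots> = (if i = k then 1 else 0)"
    using assms by (cases "i < q") (auto simp: div_greater_zero_iff)
  finally show ?thesis .
qed

definition pencil :: "nat \<Rightarrow> nat \<Rightarrow> real \<Rightarrow> complex mat" where
  "pencil q j a = 1\<^sub>m ((j+1)*q) - complex_of_real a \<cdot>\<^sub>m Tm q j"

lemma pencil_carrier[simp]: "pencil q j a \<in> carrier_mat ((j+1)*q) ((j+1)*q)"
  unfolding pencil_def using Tm_carrier[of q j] by auto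

lemma pencil_dims[simp]: "dim_row (pencil q j a) = (j+1)*q" "dim_col (pencil q j a) = (j+1)*q"
  using pencil_carrier[of q j a] by (auto simp del: pencil_carrier)

lemma index_pencil: assumes "0 < q" "i < (j+1)*q" "t < (j+1)*q"
  shows "pencil q j a $$ (i,t) = (if t = i then 1 else 0) - complex_of_real a * (if i = t + q then 1 else 0)"
  unfolding pencil_def using assms Tm_carrier[of q j] by (auto simp: Tm_index)

lemma pencil_invertible: assumes "0 < q" shows "invertible_mat (pencil q j a)"
proof (rule invertible_if_det_nonzero[OF pencil_carrier])
  have d: "det (pencil q j a) = prod_list (diag_mat (pencil q j a))"
    by (rule det_lower_triangular[OF _ pencil_carrier]) (use assms in \<open>auto simp: index_pencil\<close>)
  have e: "diag_mat (pencil q j a) = map (\<lambda>i. 1) [0..<(j+1)*q]"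
    unfolding diag_mat_def using assms by (auto simp: index_pencil)
  have p: "\<And>xs. prod_list (map (\<lambda>i. 1::complex) xs) = 1"
    by (induct_tac xs) auto
  show "det (pencil q j a) \<noteq> 0" unfolding d e p by simp
qed

lemma Rm_eq_minv_pencil: assumes "0 < q"
  shows "Rm q j (complex_of_real a) = minv (pencil q j a)"
  unfolding Rm_def pencil_def ..

lemma Rm_inverse: assumes "0 < q"
  shows "Rm q j (complex_of_real a) \<in> carrier_mat ((j+1)*q) ((j+1)*q)"
    "pencil q j a * Rm q j (complex_of_real a) = 1\<^sub>m ((j+1)*q)"
    "Rm q j (complex_of_real a) * pencil q j a = 1\<^sub>m ((j+1)*q)"
  using minv_inverse[OF pencil_invertible[OF assms] pencil_carrier] unfolding Rm_eq_minv_pencil[OF assms] by auto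

lemma index_pencil_mult: assumes "0 < q" "B \<in> carrier_mat ((j+1)*q) p" "i < (j+1)*q" "k < p"
  shows "(pencil q j a * B) $$ (i,k) = B $$ (i,k) - complex_of_real a * (if q \<le> i then B $$ (i-q,k) else 0)"
proof -
  let ?N = "(j+1)*q"
  have "(pencil q j a * B) $$ (i,k) = (\<Sum>t<?N. pencil q j a $$ (i,t) * B $$ (t,k))"
    by (rule index_mult_mat_sum[OF pencil_carrier assms(2-4)])
  also have "\<dots> = (\<Sum>t<?N. (if t = i then 1 else 0) * B $$ (t,k)
      - complex_of_real a * ((if i = t + q then 1 else 0) * B $$ (t,k)))"
    by (rule sum.cong[OF refl]) (use assms in \<open>simp add: index_pencil left_diff_distrib\<close>)
  also have "\<dots> = (\<Sum>t<?N. (if t = i then 1 else 0) * B $$ (t,k))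
      - complex_of_real a * (\<Sum>t<?N. (if i = t + q then 1 else 0) * B $$ (t,k))"
    by (simp add: sum_subtractf sum_distrib_left)
  also have "\<dots> = B $$ (i,k) - complex_of_real a * (if q \<le> i then B $$ (i-q,k) else 0)"
  proof -
    have "i - q < ?N" using assms by auto
    thus ?thesis using assms by (simp add: sum_delta_left sum_shift_delta_left)
  qed
  finally show ?thesis .
qed

lemma index_adj_pencil_mult: assumes "0 < q" "B \<in> carrier_mat ((j+1)*q) p" "i < (j+1)*q" "k < p"
  shows "(adj (pencil q j a) * B) $$ (i,k) = B $$ (i,k) - complex_of_real a * (if i + q < (j+1)*q then B $$ (i+q,k) else 0)"
proof -
  let ?N = "(j+1)*q"
  have "(adj (pencil q j a) * B) $$ (i,k) = (\<Sum>t<?N. adj (pencil q j a) $$ (i,t) * B $$ (t,k))"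
    by (rule index_mult_mat_sum[OF adj_carrier[OF pencil_carrier] assms(2-4)])
  also have "\<dots> = (\<Sum>t<?N. (if t = i then 1 else 0) * B $$ (t,k)
      - complex_of_real a * (B $$ (t,k) * (if t = i + q then 1 else 0)))"
    by (rule sum.cong[OF refl]) (use assms in \<open>auto simp add: index_pencil left_diff_distrib\<close>)
  also have "\<dots> = (\<Sum>t<?N. (if t = i then 1 else 0) * B $$ (t,k))
      - complex_of_real a * (\<Sum>t<?N. B $$ (t,k) * (if t = i + q then 1 else 0))"
    by (simp add: sum_subtractf sum_distrib_left)
  also have "\<dots> = B $$ (i,k) - complex_of_real a * (if i + q < (j+1)*q then B $$ (i+q,k) else 0)"
    using assms by (simp add: sum_delta_left sum_shift_delta_right)
  finally show ?thesis .
qed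

definition powcol :: "nat \<Rightarrow> nat \<Rightarrow> real \<Rightarrow> complex mat" where
  "powcol q j a = bcol q (j+1) (\<lambda>l. (complex_of_real a)^l \<cdot>\<^sub>m 1\<^sub>m q)"

definition kseq :: "real \<Rightarrow> (nat \<Rightarrow> complex mat) \<Rightarrow> nat \<Rightarrow> complex mat" where
  "kseq b s l = complex_of_real b \<cdot>\<^sub>m s l - s (l+1)"

definition kcol :: "nat \<Rightarrow> real \<Rightarrow> (nat \<Rightarrow> complex mat) \<Rightarrow> nat \<Rightarrow> complex mat" where
  "kcol q b s j = bcol q (j+1) (kseq b s)"

definition shift_emb :: "nat \<Rightarrow> nat \<Rightarrow> complex mat" where
  "shift_emb q j = mat ((j+1)*q) (j*q) (\<lambda>(i,k). if i = k + q then 1 else 0)"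

definition top_emb :: "nat \<Rightarrow> nat \<Rightarrow> complex mat" where
  "top_emb q j = embed_mat ((j+1)*q) (j*q)"

lemma powcol_carrier[simp]: "powcol q j a \<in> carrier_mat ((j+1)*q) q" unfolding powcol_def by (rule bcol_carrier)

lemma powcol_dims[simp]: "dim_row (powcol q j a) = (j+1)*q" "dim_col (powcol q j a) = q" unfolding powcol_def by auto

lemma kcol_carrier[simp]: "kcol q b s j \<in> carrier_mat ((j+1)*q) q" unfolding kcol_def by (rule bcol_carrier)

lemma kcol_dims[simp]: "dim_row (kcol q b s j) = (j+1)*q" "dim_col (kcol q b s j) = q" unfolding kcol_def by auto

lemma shift_emb_carrier[simp]: "shift_emb q j \<in> carrier_mat ((j+1)*q) (j*q)" unfolding shift_emb_def by simp

lemma shift_emb_dims[simp]: "dim_row (shift_emb q j) = (j+1)*q" "dim_col (shift_emb q j) = j*q" unfolding shift_emb_def by auto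

lemma top_emb_carrier[simp]: "top_emb q j \<in> carrier_mat ((j+1)*q) (j*q)" unfolding top_emb_def by simp

lemma top_emb_dims[simp]: "dim_row (top_emb q j) = (j+1)*q" "dim_col (top_emb q j) = j*q" unfolding top_emb_def by auto

lemma vv_dims[simp]: "dim_row (vv q j) = (j+1)*q" "dim_col (vv q j) = q"
  using vv_carrier[of q j] by (auto simp del: vv_carrier)

lemma K1_hankel: "K1 q b s j = bmat q (j+1) (j+1) (\<lambda>l k. kseq b s (l+k))"
  unfolding K1_def kseq_def by simp

lemma K1_dims[simp]: "dim_row (K1 q b s j) = (j+1)*q" "dim_col (K1 q b s j) = (j+1)*q"
  unfolding K1_def by auto

lemma H2_dims[simp]: "dim_row (H2 q a b s j) = (j+1)*q" "dim_col (H2 q a b s j) = (j+1)*q"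
  unfolding H2_def by auto

lemma K1_carrier[simp]: "K1 q b s j \<in> carrier_mat ((j+1)*q) ((j+1)*q)"
  unfolding K1_def by (rule bmat_carrier)

lemma H2_carrier[simp]: "H2 q a b s j \<in> carrier_mat ((j+1)*q) ((j+1)*q)"
  unfolding H2_def by (rule bmat_carrier)

lemma kseq_herm: assumes "s l \<in> carrier_mat q q" "adj (s l) = s l" "s (l+1) \<in> carrier_mat q q" "adj (s (l+1)) = s (l+1)"
  shows "kseq b s l \<in> carrier_mat q q" "adj (kseq b s l) = kseq b s l"
  using assms unfolding kseq_def by (auto simp: adj_minus[of _ q q] adj_smult minus_carrier_mat)

lemma shat_herm: assumes "s l \<in> carrier_mat q q" "adj (s l) = s l" "s (l+1) \<in> carrier_mat q q" "adj (s (l+1)) = s (l+1)"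
   "s (l+2) \<in> carrier_mat q q" "adj (s (l+2)) = s (l+2)"
  shows "shat a b s l \<in> carrier_mat q q" "adj (shat a b s l) = shat a b s l"
proof -
  show c: "shat a b s l \<in> carrier_mat q q" using assms unfolding shat_def by (simp add: minus_carrier_mat)
  show "adj (shat a b s l) = shat a b s l"
    using assms unfolding shat_def
    by (simp add: adj_minus[of _ q q] adj_add[of _ q q] adj_smult)
qed

lemma pencil_powcol: assumes "0 < q" shows "pencil q j a * powcol q j a = vv q j"
proof (rule eq_matI)
  fix i k assume "i < dim_row (vv q j)" "k < dim_col (vv q j)"
  hence ik: "i < (j+1)*q" "k < q" by auto
  have xe: "\<And>i. i < (j+1)*q \<Longrightarrow> powcol q j a $$ (i,k) = complex_of_real a ^ (i div q) * (if i mod q = k then 1 else 0)"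
    unfolding powcol_def using ik assms by (simp add: bcol_index)
  have "(pencil q j a * powcol q j a) $$ (i,k) = powcol q j a $$ (i,k) - complex_of_real a * (if q \<le> i then powcol q j a $$ (i-q,k) else 0)"
    by (rule index_pencil_mult[OF assms powcol_carrier ik])
  also have "\<dots> = vv q j $$ (i,k)"
  proof (cases "q \<le> i")
    case True
    have d: "i div q = Suc ((i-q) div q)" "i mod q = (i-q) mod q"
      using True assms by (simp_all add: le_div_geq le_mod_geq)
    have "i - q < (j+1)*q" using ik by auto
    hence "powcol q j a $$ (i,k) - complex_of_real a * (if q \<le> i then powcol q j a $$ (i-q,k) else 0) = 0"
      using True ik d by (simp add: xe)
    thus ?thesis using True ik assms by (simp add: vv_index)
  next
    case False
    thus ?thesis using ik assms by (simp add: xe vv_index)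
  qed
  finally show "(pencil q j a * powcol q j a) $$ (i,k) = vv q j $$ (i,k)" .
qed auto

lemma adj_pencil_vv: assumes "0 < q" shows "adj (pencil q j a) * vv q j = vv q j"
proof (rule eq_matI)
  fix i k assume "i < dim_row (vv q j)" "k < dim_col (vv q j)"
  hence ik: "i < (j+1)*q" "k < q" by auto
  have "(adj (pencil q j a) * vv q j) $$ (i,k) = vv q j $$ (i,k) - complex_of_real a * (if i + q < (j+1)*q then vv q j $$ (i+q,k) else 0)"
    by (rule index_adj_pencil_mult[OF assms vv_carrier ik])
  also have "\<dots> = vv q j $$ (i,k)" using ik assms by (simp add: vv_index)
  finally show "(adj (pencil q j a) * vv q j) $$ (i,k) = vv q j $$ (i,k)" .
qed auto

lemma bmat_mult_vv: assumes "0 < q"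
  shows "bmat q (j+1) (j+1) f * vv q j = bcol q (j+1) (\<lambda>l. f l 0)"
proof (rule eq_matI)
  fix i k assume "i < dim_row (bcol q (j+1) (\<lambda>l. f l 0))" "k < dim_col (bcol q (j+1) (\<lambda>l. f l 0))"
  hence ik: "i < (j+1)*q" "k < q" by auto
  have "(bmat q (j+1) (j+1) f * vv q j) $$ (i,k) = (\<Sum>t<(j+1)*q. bmat q (j+1) (j+1) f $$ (i,t) * vv q j $$ (t,k))"
    by (rule index_mult_mat_sum[OF bmat_carrier vv_carrier ik])
  also have "\<dots> = (\<Sum>t<(j+1)*q. bmat q (j+1) (j+1) f $$ (i,t) * (if t = k then 1 else 0))"
    by (rule sum.cong[OF refl]) (use assms ik in \<open>auto simp: vv_index\<close>)
  also have "\<dots> = bmat q (j+1) (j+1) f $$ (i,k)"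
    by (rule sum_delta_right) (use ik in auto)
  also have "\<dots> = bcol q (j+1) (\<lambda>l. f l 0) $$ (i,k)"
  proof -
    have "k < (j+1)*q" using ik by (auto intro: less_le_trans)
    thus ?thesis using ik assms by (simp add: bmat_index bcol_index)
  qed
  finally show "(bmat q (j+1) (j+1) f * vv q j) $$ (i,k) = bcol q (j+1) (\<lambda>l. f l 0) $$ (i,k)" .
qed auto

lemma K1_mult_vv: assumes "0 < q" shows "K1 q b s j * vv q j = kcol q b s j"
  unfolding K1_hankel kcol_def using bmat_mult_vv[OF assms, of j "\<lambda>l k. kseq b s (l+k)"] by simp

lemma index_kseq: "s l \<in> carrier_mat q q \<Longrightarrow> s (l+1) \<in> carrier_mat q q \<Longrightarrow> r < q \<Longrightarrow> k < q \<Longrightarrow>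
  kseq b s l $$ (r,k) = complex_of_real b * s l $$ (r,k) - s (l+1) $$ (r,k)"
  unfolding kseq_def by auto

lemma index_shat: "s l \<in> carrier_mat q q \<Longrightarrow> s (l+1) \<in> carrier_mat q q \<Longrightarrow> s (l+2) \<in> carrier_mat q q \<Longrightarrow> r < q \<Longrightarrow> k < q \<Longrightarrow>
  shat a b s l $$ (r,k) = - (complex_of_real a * complex_of_real b) * s l $$ (r,k)
     + (complex_of_real a + complex_of_real b) * s (l+1) $$ (r,k) - s (l+2) $$ (r,k)"
  unfolding shat_def by auto

lemma index_u20: "s 0 \<in> carrier_mat q q \<Longrightarrow> s 1 \<in> carrier_mat q q \<Longrightarrow> r < q \<Longrightarrow> k < q \<Longrightarrow>
  u20 a b s $$ (r,k) = - ((complex_of_real a + complex_of_real b) * s 0 $$ (r,k)) + s 1 $$ (r,k)"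
  unfolding u20_def by auto

lemma index_vv_mult: assumes "0 < q" "s 0 \<in> carrier_mat q q" "i < (j+1)*q" "k < q"
  shows "(vv q j * s 0) $$ (i,k) = (if i < q then s 0 $$ (i,k) else 0)"
proof -
  have "(vv q j * s 0) $$ (i,k) = (\<Sum>t<q. vv q j $$ (i,t) * s 0 $$ (t,k))"
    by (rule index_mult_mat_sum[OF vv_carrier assms(2) assms(3,4)])
  also have "\<dots> = (\<Sum>t<q. (if t = i then 1 else 0) * s 0 $$ (t,k))"
    by (rule sum.cong[OF refl]) (use assms in \<open>auto simp: vv_index\<close>)
  also have "\<dots> = (if i < q then s 0 $$ (i,k) else 0)"
    by (cases "i < q") (auto simp: sum_delta_left)
  finally show ?thesis .
qed

lemma pencil_kcol: assumes q: "0 < q" and s: "\<And>l. l \<le> j+1 \<Longrightarrow> s l \<in> carrier_mat q q"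
  shows "pencil q j a * kcol q b s j = - (u2 q a b s j + complex_of_real a \<cdot>\<^sub>m (vv q j * s 0))"
proof (rule eq_matI)
  fix i k assume "i < dim_row (- (u2 q a b s j + complex_of_real a \<cdot>\<^sub>m (vv q j * s 0)))"
    "k < dim_col (- (u2 q a b s j + complex_of_real a \<cdot>\<^sub>m (vv q j * s 0)))"
  hence ik: "i < (j+1)*q" "k < q" using s[of 0] by (auto simp: u2_def)
  have ld: "i div q \<le> j" using ik q by (metis less_mult_imp_div_less add.commute less_Suc_eq_le plus_1_eq_Suc)
  have rm: "i mod q < q" using q by simp
  have ce: "\<And>ii. ii < (j+1)*q \<Longrightarrow> kcol q b s j $$ (ii,k) = complex_of_real b * s (ii div q) $$ (ii mod q,k) - s (ii div q + 1) $$ (ii mod q, k)"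
  proof -
    fix ii assume i: "ii < (j+1)*q"
    have ld: "ii div q + 1 \<le> j + 1" using i q by (metis less_mult_imp_div_less add.commute less_Suc_eq_le plus_1_eq_Suc add_le_cancel_right)
    have "kcol q b s j $$ (ii,k) = kseq b s (ii div q) $$ (ii mod q, k)"
      unfolding kcol_def using i ik by (simp add: bcol_index)
    also have "\<dots> = complex_of_real b * s (ii div q) $$ (ii mod q,k) - s (ii div q + 1) $$ (ii mod q, k)"
      by (rule index_kseq) (use s ld q ik in auto)
    finally show "kcol q b s j $$ (ii,k) = complex_of_real b * s (ii div q) $$ (ii mod q,k) - s (ii div q + 1) $$ (ii mod q, k)" .
  qed
  have u2c: "u2 q a b s j \<in> carrier_mat ((j+1)*q) q" unfolding u2_def by (rule bcol_carrier)
  have vsc: "vv q j * s 0 \<in> carrier_mat ((j+1)*q) q" using s[of 0] by auto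
  have e: "(- (u2 q a b s j + complex_of_real a \<cdot>\<^sub>m (vv q j * s 0))) $$ (i,k)
     = - (u2 q a b s j $$ (i,k) + complex_of_real a * (vv q j * s 0) $$ (i,k))"
    using u2c vsc ik s[of 0] by (simp add: carrier_matD)
  have "(pencil q j a * kcol q b s j) $$ (i,k) = kcol q b s j $$ (i,k) - complex_of_real a * (if q \<le> i then kcol q b s j $$ (i-q,k) else 0)"
    by (rule index_pencil_mult[OF q kcol_carrier ik])
  also have "\<dots> = (- (u2 q a b s j + complex_of_real a \<cdot>\<^sub>m (vv q j * s 0))) $$ (i,k)"
  proof (cases "q \<le> i")
    case True
    define d where "d = (i-q) div q"
    have d: "i div q = Suc d" "i mod q = (i-q) mod q"
      using True q by (simp_all add: le_div_geq le_mod_geq d_def)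
    have iq: "i - q < (j+1)*q" using ik by auto
    have dj: "d + 2 \<le> j + 1" using ld d by simp
    have sd: "s d \<in> carrier_mat q q" "s (d+1) \<in> carrier_mat q q" "s (d+2) \<in> carrier_mat q q"
      using s dj by auto
    have sh: "shat a b s d \<in> carrier_mat q q" using sd by (simp add: shat_def minus_carrier_mat)
    have u: "u2 q a b s j $$ (i,k) = - shat a b s d $$ (i mod q, k)"
      unfolding u2_def using ik q d sd rm sh by (simp add: bcol_index)
    show ?thesis unfolding e using True ik iq q d u sd rm
      by (simp add: ce index_vv_mult s d_def[symmetric] index_shat algebra_simps numeral_2_eq_2)
  next
    case False
    have u: "u2 q a b s j $$ (i,k) = u20 a b s $$ (i, k)"
      unfolding u2_def using ik q False by (simp add: bcol_index)
    have u0: "u20 a b s $$ (i, k) = - ((complex_of_real a + complex_of_real b) * s 0 $$ (i,k)) + s 1 $$ (i,k)"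
      by (rule index_u20) (use s[of 0] s[of 1] False ik in auto)
    show ?thesis unfolding e using False ik q u s[of 0] s[of 1]
      by (simp add: ce index_vv_mult s u0 algebra_simps)
  qed
  finally show "(pencil q j a * kcol q b s j) $$ (i,k) = (- (u2 q a b s j + complex_of_real a \<cdot>\<^sub>m (vv q j * s 0))) $$ (i,k)" .
qed (use s[of 0] in \<open>auto simp: u2_def\<close>)

lemma adj_pencil_shift_emb: assumes "0 < q"
  shows "adj (pencil q j a) * shift_emb q j = mat ((j+1)*q) (j*q) (\<lambda>(t,k). (if t = k + q then 1 else 0) - complex_of_real a * (if t = k then 1 else 0))"
proof (rule eq_matI)
  fix t k assume "t < dim_row (mat ((j+1)*q) (j*q) (\<lambda>(t,k). (if t = k + q then 1 else 0) - complex_of_real a * (if t = k then 1 else (0::complex))))"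
    "k < dim_col (mat ((j+1)*q) (j*q) (\<lambda>(t,k). (if t = k + q then 1 else 0) - complex_of_real a * (if t = k then 1 else (0::complex))))"
  hence tk: "t < (j+1)*q" "k < j*q" by auto
  have "(adj (pencil q j a) * shift_emb q j) $$ (t,k) = shift_emb q j $$ (t,k) - complex_of_real a * (if t + q < (j+1)*q then shift_emb q j $$ (t+q,k) else 0)"
    by (rule index_adj_pencil_mult[OF assms shift_emb_carrier tk])
  also have "\<dots> = (if t = k + q then 1 else 0) - complex_of_real a * (if t = k then 1 else 0)"
    using tk by (auto simp: shift_emb_def)
  finally show "(adj (pencil q j a) * shift_emb q j) $$ (t,k) = mat ((j+1)*q) (j*q) (\<lambda>(t,k). (if t = k + q then 1 else 0) - complex_of_real a * (if t = k then 1 else (0::complex))) $$ (t,k)"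
    using tk by simp
qed auto

definition shift_pencil :: "nat \<Rightarrow> nat \<Rightarrow> real \<Rightarrow> complex mat" where
  "shift_pencil q j a = adj (pencil q j a) * shift_emb q j"

lemma shift_pencil_carrier[simp]: "shift_pencil q j a \<in> carrier_mat ((j+1)*q) (j*q)"
  unfolding shift_pencil_def by (intro carrier_matI) simp_all

lemma shift_pencil_dims[simp]: "dim_row (shift_pencil q j a) = (j+1)*q" "dim_col (shift_pencil q j a) = j*q"
  unfolding shift_pencil_def by simp_all

lemma K1_shift_pencil: assumes q: "0 < q" and s: "\<And>l. l \<le> 2*j+1 \<Longrightarrow> s l \<in> carrier_mat q q"
  shows "K1 q b s j * shift_pencil q j a = H2 q a b s j * top_emb q j"
proof (rule eq_matI)
  let ?N = "(j+1)*q"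
  fix i k assume "i < dim_row (H2 q a b s j * top_emb q j)" "k < dim_col (H2 q a b s j * top_emb q j)"
  hence ik: "i < ?N" "k < j*q" by (auto simp: H2_def)
  have kN: "k < ?N" "k + q < ?N" using ik by auto
  define l where "l = i div q"
  define m where "m = k div q"
  have lm: "l \<le> j" "m < j" using ik q unfolding l_def m_def
    by (metis less_mult_imp_div_less add.commute less_Suc_eq_le plus_1_eq_Suc, simp add: less_mult_imp_div_less)
  have sl: "s (l+m) \<in> carrier_mat q q" "s (l+m+1) \<in> carrier_mat q q" "s (l+m+2) \<in> carrier_mat q q"
    using s lm by auto
  have r: "i mod q < q" "k mod q < q" using q by auto
  let ?B = "mat ((j+1)*q) (j*q) (\<lambda>(t,k). (if t = k + q then 1 else 0) - complex_of_real a * (if t = k then 1 else (0::complex)))"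
  have "(K1 q b s j * shift_pencil q j a) $$ (i,k) = (K1 q b s j * ?B) $$ (i,k)"
    unfolding shift_pencil_def adj_pencil_shift_emb[OF q] ..
  also have "\<dots> = (\<Sum>t<?N. K1 q b s j $$ (i,t) * ?B $$ (t,k))"
    by (rule index_mult_mat_sum[of _ ?N ?N _ "j*q"]) (use ik in \<open>auto simp: K1_def\<close>)
  also have "\<dots> = (\<Sum>t<?N. K1 q b s j $$ (i,t) * (if t = k + q then 1 else 0))
      - complex_of_real a * (\<Sum>t<?N. K1 q b s j $$ (i,t) * (if t = k then 1 else 0))"
    by (simp add: sum_subtractf sum_distrib_left right_diff_distrib ac_simps ik)
  also have "\<dots> = K1 q b s j $$ (i,k+q) - complex_of_real a * K1 q b s j $$ (i,k)"
    using kN by (simp add: sum_delta_right)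
  also have "\<dots> = kseq b s (l+m+1) $$ (i mod q, k mod q) - complex_of_real a * kseq b s (l+m) $$ (i mod q, k mod q)"
    unfolding K1_hankel using ik kN q by (simp add: bmat_index l_def m_def)
  also have "\<dots> = shat a b s (l+m) $$ (i mod q, k mod q)"
    using sl r by (simp add: index_kseq index_shat algebra_simps numeral_2_eq_2)
  also have "\<dots> = H2 q a b s j $$ (i,k)"
    unfolding H2_def using ik kN q by (simp add: bmat_index l_def m_def)
  also have "\<dots> = (H2 q a b s j * top_emb q j) $$ (i,k)"
    unfolding top_emb_def by (rule index_mult_embed[symmetric]) (use ik in \<open>auto simp: H2_def\<close>)
  finally show "(K1 q b s j * shift_pencil q j a) $$ (i,k) = (H2 q a b s j * top_emb q j) $$ (i,k)" .
qed (auto simp: H2_def K1_def)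

lemma ut1_carrier[simp]: "ut1 q b s j \<in> carrier_mat ((j+1)*q) q" unfolding ut1_def by (rule bcol_carrier)

lemma ut1_dims[simp]: "dim_row (ut1 q b s j) = (j+1)*q" "dim_col (ut1 q b s j) = q" unfolding ut1_def by auto

lemma u2_carrier[simp]: "u2 q a b s j \<in> carrier_mat ((j+1)*q) q" unfolding u2_def by (rule bcol_carrier)

lemma index_adj_shift_emb_mult: assumes "B \<in> carrier_mat ((j+1)*q) p" "i < j*q" "k < p"
  shows "(adj (shift_emb q j) * B) $$ (i,k) = B $$ (i+q,k)"
proof -
  have "(adj (shift_emb q j) * B) $$ (i,k) = (\<Sum>t<(j+1)*q. adj (shift_emb q j) $$ (i,t) * B $$ (t,k))"
    by (rule index_mult_mat_sum[of _ "j*q" "(j+1)*q" _ p]) (use assms in auto)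
  also have "\<dots> = (\<Sum>t<(j+1)*q. (if t = i + q then 1 else 0) * B $$ (t,k))"
    by (rule sum.cong[OF refl]) (use assms in \<open>auto simp: shift_emb_def\<close>)
  also have "\<dots> = B $$ (i+q,k)" by (rule sum_delta_left) (use assms in auto)
  finally show ?thesis .
qed

lemma adj_shift_emb_ut1: assumes q: "0 < q" and s: "\<And>l. l \<le> j \<Longrightarrow> s l \<in> carrier_mat q q"
  shows "adj (shift_emb q j) * ut1 q b s j = - (adj (top_emb q j) * kcol q b s j)"
proof (rule eq_matI)
  fix i k assume "i < dim_row (- (adj (top_emb q j) * kcol q b s j))" "k < dim_col (- (adj (top_emb q j) * kcol q b s j))"
  hence ik: "i < j*q" "k < q" by auto
  define l where "l = i div q"
  have lj: "l < j" using ik q unfolding l_def by (simp add: less_mult_imp_div_less)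
  have iN: "i + q < (j+1)*q" "i < (j+1)*q" using ik by auto
  have r: "i mod q < q" using q by auto
  have d: "(i+q) div q = l + 1" "(i+q) mod q = i mod q" using q by (auto simp: l_def)
  have sl: "s l \<in> carrier_mat q q" "s (l+1) \<in> carrier_mat q q" using s lj by auto
  have "(adj (shift_emb q j) * ut1 q b s j) $$ (i,k) = ut1 q b s j $$ (i+q,k)"
    by (rule index_adj_shift_emb_mult[OF ut1_carrier ik])
  also have "\<dots> = s (l+1) $$ (i mod q, k) - complex_of_real b * s l $$ (i mod q, k)"
    unfolding ut1_def using iN ik d sl r by (simp add: bcol_index)
  also have "\<dots> = - (kcol q b s j $$ (i,k))"
    unfolding kcol_def using iN ik sl r by (simp add: bcol_index index_kseq l_def)
  also have "kcol q b s j $$ (i,k) = (adj (top_emb q j) * kcol q b s j) $$ (i,k)"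
    unfolding top_emb_def by (rule index_adj_embed_mult[symmetric]) (use ik in auto)
  finally show "(adj (shift_emb q j) * ut1 q b s j) $$ (i,k) = (- (adj (top_emb q j) * kcol q b s j)) $$ (i,k)"
    using ik by simp
qed auto

lemma vv_shift_emb_partition: assumes q: "0 < q"
  shows "vv q j * adj (vv q j) + shift_emb q j * adj (shift_emb q j) = 1\<^sub>m ((j+1)*q)"
proof (rule eq_matI)
  let ?N = "(j+1)*q"
  fix i t assume "i < dim_row (1\<^sub>m ?N :: complex mat)" "t < dim_col (1\<^sub>m ?N :: complex mat)"
  hence it: "i < ?N" "t < ?N" by auto
  have e1: "(vv q j * adj (vv q j)) $$ (i,t) = (\<Sum>k<q. (if k = i then 1 else 0) * (if t = k then 1 else 0))"
    by (subst index_mult_mat_sum[of _ ?N q _ ?N]) (use it q in \<open>auto simp: vv_index intro!: sum.cong\<close>)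
  have e2: "(shift_emb q j * adj (shift_emb q j)) $$ (i,t) = (\<Sum>k<j*q. (if i = k + q then 1 else 0) * (if t = k + q then 1 else 0))"
    by (subst index_mult_mat_sum[of _ ?N "j*q" _ ?N]) (use it q in \<open>auto simp: shift_emb_def intro!: sum.cong\<close>)
  show "(vv q j * adj (vv q j) + shift_emb q j * adj (shift_emb q j)) $$ (i,t) = 1\<^sub>m ?N $$ (i,t)"
  proof (cases "i < q")
    case True
    have "(\<Sum>k<j*q. (if i = k + q then 1 else 0) * (if t = k + q then 1 else (0::complex))) = 0"
      using True by (intro sum.neutral) auto
    moreover have "(\<Sum>k<q. (if k = i then 1 else 0) * (if t = k then 1 else (0::complex))) = (if t = i then 1 else 0)"
      using True by (subst sum_delta_left) auto
    ultimately show ?thesis using it e1 e2 by auto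
  next
    case False
    have "(\<Sum>k<q. (if k = i then 1 else 0) * (if t = k then 1 else (0::complex))) = 0"
      using False by (intro sum.neutral) auto
    moreover have "(\<Sum>k<j*q. (if i = k + q then 1 else 0) * (if t = k + q then 1 else (0::complex))) = (if t = i then 1 else 0)"
    proof -
      have "(\<Sum>k<j*q. (if i = k + q then 1 else 0) * (if t = k + q then 1 else (0::complex)))
          = (\<Sum>k<j*q. (if k = i - q then 1 else 0) * (if t = k + q then 1 else (0::complex)))"
        using False by (intro sum.cong) auto
      also have "\<dots> = (if t = i - q + q then 1 else 0)" using False it by (subst sum_delta_left) auto
      finally show ?thesis using False by simp
    qed
    ultimately show ?thesis using it e1 e2 by auto
  qed
qed auto

lemma adj_vv_ut1: assumes q: "0 < q" and s0: "s 0 \<in> carrier_mat q q"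
  shows "adj (vv q j) * ut1 q b s j = s 0"
proof (rule eq_matI)
  fix i k assume "i < dim_row (s 0)" "k < dim_col (s 0)"
  hence ik: "i < q" "k < q" using s0 by auto
  have "(adj (vv q j) * ut1 q b s j) $$ (i,k) = (\<Sum>t<(j+1)*q. (if t = i then 1 else 0) * ut1 q b s j $$ (t,k))"
    by (subst index_mult_mat_sum[of _ q "(j+1)*q" _ q]) (use ik q in \<open>auto simp: vv_index intro!: sum.cong\<close>)
  also have "\<dots> = ut1 q b s j $$ (i,k)" by (rule sum_delta_left) (use ik in auto)
  also have "\<dots> = s 0 $$ (i,k)" unfolding ut1_def using ik by (simp add: bcol_index)
  finally show "(adj (vv q j) * ut1 q b s j) $$ (i,k) = s 0 $$ (i,k)" .
qed (use s0 in auto)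

lemma top_emb_eq_append_rows: "top_emb q j = 1\<^sub>m (j*q) @\<^sub>r 0\<^sub>m q (j*q)"
  unfolding top_emb_def embed_mat_def append_rows_def by (rule eq_matI) auto

lemma Rm_vv: assumes q: "0 < q" shows "Rm q j (complex_of_real a) * vv q j = powcol q j a"
proof -
  note R = Rm_inverse[OF q, of j a]
  have "Rm q j (complex_of_real a) * vv q j = Rm q j (complex_of_real a) * (pencil q j a * powcol q j a)"
    unfolding pencil_powcol[OF q] ..
  also have "\<dots> = (Rm q j (complex_of_real a) * pencil q j a) * powcol q j a"
    by (rule assoc_mult_mat[symmetric, of _ "(j+1)*q" "(j+1)*q" _ "(j+1)*q" _ q]) (use R in auto)
  finally show ?thesis using R by simp
qed

lemma adj_pencil_adj_Rm: assumes q: "0 < q" shows "adj (pencil q j a) * adj (Rm q j (complex_of_real a)) = 1\<^sub>m ((j+1)*q)"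
proof -
  note R = Rm_inverse[OF q, of j a]
  have "adj (Rm q j (complex_of_real a) * pencil q j a) = adj (pencil q j a) * adj (Rm q j (complex_of_real a))"
    by (rule adj_mult) (use R in auto)
  thus ?thesis using R by simp
qed

lemma pencil_decomposition: assumes q: "0 < q" and l: "ll \<in> carrier_mat ((j+1)*q) p"
  shows "ll = vv q j * (adj (powcol q j a) * ll) + shift_pencil q j a * (adj (shift_emb q j) * adj (Rm q j (complex_of_real a)) * ll)"
proof -
  let ?R = "Rm q j (complex_of_real a)"
  let ?N = "(j+1)*q"
  note R = Rm_inverse[OF q, of j a]
  have Rc: "adj ?R \<in> carrier_mat ?N ?N" using R by simp
  have RL: "adj ?R * ll \<in> carrier_mat ?N p" using Rc l by simp
  have "ll = (adj (pencil q j a) * adj ?R) * ll" using adj_pencil_adj_Rm[OF q, of j a] l by simp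
  also have "\<dots> = adj (pencil q j a) * (adj ?R * ll)"
    by (rule assoc_mult_mat[of _ ?N ?N _ ?N _ p]) (use Rc l in auto)
  also have "adj ?R * ll = (vv q j * adj (vv q j) + shift_emb q j * adj (shift_emb q j)) * (adj ?R * ll)"
    unfolding vv_shift_emb_partition[OF q] using left_mult_one_mat[OF RL] by simp
  also have "\<dots> = vv q j * (adj (vv q j) * (adj ?R * ll)) + shift_emb q j * (adj (shift_emb q j) * (adj ?R * ll))"
  proof -
    have c1: "vv q j * adj (vv q j) \<in> carrier_mat ?N ?N" by (rule carrier_matI) simp_all
    have c2: "shift_emb q j * adj (shift_emb q j) \<in> carrier_mat ?N ?N" by (rule carrier_matI) simp_all
    show ?thesis using add_mult_distrib_mat[OF c1 c2 RL]
      assoc_mult_mat[OF vv_carrier adj_carrier[OF vv_carrier] RL]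
      assoc_mult_mat[OF shift_emb_carrier adj_carrier[OF shift_emb_carrier] RL] by simp
  qed
  also have "adj (pencil q j a) * \<dots> = (adj (pencil q j a) * vv q j) * (adj (vv q j) * (adj ?R * ll)) + (adj (pencil q j a) * shift_emb q j) * (adj (shift_emb q j) * (adj ?R * ll))"
  proof -
    have c3: "adj (vv q j) * (adj ?R * ll) \<in> carrier_mat q p" using mult_carrier_mat[OF adj_carrier[OF vv_carrier] RL] .
    have c4: "adj (shift_emb q j) * (adj ?R * ll) \<in> carrier_mat (j*q) p" using mult_carrier_mat[OF adj_carrier[OF shift_emb_carrier] RL] .
    have c1: "vv q j * (adj (vv q j) * (adj ?R * ll)) \<in> carrier_mat ?N p" using mult_carrier_mat[OF vv_carrier c3] .
    have c2: "shift_emb q j * (adj (shift_emb q j) * (adj ?R * ll)) \<in> carrier_mat ?N p" using mult_carrier_mat[OF shift_emb_carrier c4] .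
    show ?thesis using mult_add_distrib_mat[OF adj_carrier[OF pencil_carrier] c1 c2]
      assoc_mult_mat[OF adj_carrier[OF pencil_carrier] vv_carrier c3]
      assoc_mult_mat[OF adj_carrier[OF pencil_carrier] shift_emb_carrier c4] by simp
  qed
  also have "adj (vv q j) * (adj ?R * ll) = adj (powcol q j a) * ll"
  proof -
    have "adj (vv q j) * (adj ?R * ll) = (adj (vv q j) * adj ?R) * ll"
      using assoc_mult_mat[OF adj_carrier[OF vv_carrier] Rc l] by simp
    also have "adj (vv q j) * adj ?R = adj (?R * vv q j)" by (rule adj_mult[symmetric]) (use R in auto)
    finally show ?thesis unfolding Rm_vv[OF q] .
  qed
  also have "adj (shift_emb q j) * (adj ?R * ll) = adj (shift_emb q j) * adj ?R * ll"
    using assoc_mult_mat[OF adj_carrier[OF shift_emb_carrier] Rc l] by simp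
  finally show ?thesis unfolding adj_pencil_vv[OF q] shift_pencil_def .
qed

lemma mu_eq: assumes q: "0 < q" and K: "invertible_mat (K1 q b s j)"
  shows "mu q a b s j = adj (powcol q j a) * minv (K1 q b s j) * powcol q j a"
proof -
  let ?R = "Rm q j (complex_of_real a)"
  let ?N = "(j+1)*q"
  note R = Rm_inverse[OF q, of j a]
  have Kc: "K1 q b s j \<in> carrier_mat ?N ?N" unfolding K1_def bmat_def by simp
  note Ki = minv_inverse[OF K Kc]
  have "mu q a b s j = adj (vv q j) * adj ?R * minv (K1 q b s j) * ?R * vv q j"
    unfolding mu_def Let_def ..
  also have "\<dots> = (adj (vv q j) * adj ?R) * minv (K1 q b s j) * (?R * vv q j)"
    using R Ki by (simp add: assoc_mult_mat_dims carrier_matD)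
  also have "adj (vv q j) * adj ?R = adj (?R * vv q j)" by (rule adj_mult[symmetric]) (use R in auto)
  finally show ?thesis unfolding Rm_vv[OF q] .
qed

lemma Rm_u2: assumes q: "0 < q" and s: "\<And>l. l \<le> j+1 \<Longrightarrow> s l \<in> carrier_mat q q"
  shows "Rm q j (complex_of_real a) * (u2 q a b s j + complex_of_real a \<cdot>\<^sub>m (vv q j * s 0)) = - kcol q b s j"
proof -
  let ?R = "Rm q j (complex_of_real a)"
  let ?N = "(j+1)*q"
  let ?w = "u2 q a b s j + complex_of_real a \<cdot>\<^sub>m (vv q j * s 0)"
  note R = Rm_inverse[OF q, of j a]
  have wc: "?w \<in> carrier_mat ?N q" using s[of 0] by auto
  have "kcol q b s j = (?R * pencil q j a) * kcol q b s j" using R by simp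
  also have "\<dots> = ?R * (pencil q j a * kcol q b s j)"
    by (rule assoc_mult_mat[of _ ?N ?N _ ?N _ q]) (use R in auto)
  also have "\<dots> = ?R * (- ?w)" using pencil_kcol[OF q s] by simp
  also have "\<dots> = - (?R * ?w)" using R wc by (simp add: carrier_matD)
  finally have "- kcol q b s j = - (- (?R * ?w))" by simp
  also have "\<dots> = ?R * ?w" by (rule eq_matI) auto
  finally show ?thesis by simp
qed

lemma lam_eq: assumes q: "0 < q" and s: "\<And>l. l \<le> j+1 \<Longrightarrow> s l \<in> carrier_mat q q"
  and H: "invertible_mat (H2 q a b s j)"
  shows "lam q a b s j = adj (kcol q b s j) * minv (H2 q a b s j) * kcol q b s j"
proof -
  let ?R = "Rm q j (complex_of_real a)"
  let ?N = "(j+1)*q"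
  let ?w = "u2 q a b s j + complex_of_real a \<cdot>\<^sub>m (vv q j * s 0)"
  note R = Rm_inverse[OF q, of j a]
  have wc: "?w \<in> carrier_mat ?N q" using s[of 0] by auto
  have Hc: "H2 q a b s j \<in> carrier_mat ?N ?N" unfolding H2_def bmat_def by simp
  note Hi = minv_inverse[OF H Hc]
  have "lam q a b s j = adj ?w * adj ?R * minv (H2 q a b s j) * ?R * ?w"
    unfolding lam_def Let_def ..
  also have "\<dots> = (adj ?w * adj ?R) * minv (H2 q a b s j) * (?R * ?w)"
    using R Hi wc by (simp add: assoc_mult_mat_dims carrier_matD)
  also have "adj ?w * adj ?R = adj (?R * ?w)" by (rule adj_mult[symmetric]) (use R wc in auto)
  also have "?R * ?w = - kcol q b s j" by (rule Rm_u2[OF q s])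
  also have "adj (- kcol q b s j) * minv (H2 q a b s j) * (- kcol q b s j) = adj (kcol q b s j) * minv (H2 q a b s j) * kcol q b s j"
    using Hi by (simp add: adj_uminus carrier_matD)
  finally show ?thesis .
qed

lemma adj_vv_Rm: assumes q: "0 < q"
  shows "adj (vv q j) * Rm q j (complex_of_real a) = adj (vv q j)"
proof -
  let ?R = "Rm q j (complex_of_real a)"
  note R = Rm_inverse[OF q, of j a]
  have "adj (adj (pencil q j a) * vv q j) = adj (vv q j) * pencil q j a" by (simp add: adj_mult_dims)
  hence e: "adj (vv q j) * pencil q j a = adj (vv q j)" using adj_pencil_vv[OF q, of j a] by simp
  have "adj (vv q j) * ?R = (adj (vv q j) * pencil q j a) * ?R" unfolding e ..
  also have "\<dots> = adj (vv q j) * (pencil q j a * ?R)" using R(1) by (simp add: assoc_mult_mat_dims)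
  finally show ?thesis using R(2) by simp
qed

lemma adj_ut1_Rm_vv:
  assumes q: "0 < q" and s0: "s 0 \<in> carrier_mat q q" "adj (s 0) = s 0"
  shows "adj (ut1 q b s j) * adj (Rm q j (complex_of_real a)) * vv q j = s 0"
proof -
  let ?R = "Rm q j (complex_of_real a)"
  have Rd: "dim_row ?R = (j+1)*q" "dim_col ?R = (j+1)*q" using Rm_inverse(1)[OF q, of j a] by auto
  have "adj (ut1 q b s j) * adj ?R * vv q j = adj (adj (vv q j) * ?R * ut1 q b s j)"
    using Rd by (simp add: adj_mult_dims assoc_mult_mat_dims)
  also have "\<dots> = adj (s 0)" unfolding adj_vv_Rm[OF q] adj_vv_ut1[where s=s, OF q s0(1)] ..
  finally show ?thesis using s0 by simp
qed

lemma adj_ut1_Rm_shift: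
  assumes q: "0 < q" and s: "\<And>l. l \<le> j \<Longrightarrow> s l \<in> carrier_mat q q"
    and K_herm: "adj (K1 q b s j) = K1 q b s j"
  shows "adj (ut1 q b s j) * adj (Rm q j (complex_of_real a)) * shift_pencil q j a
       = - (adj (vv q j) * K1 q b s j * top_emb q j)"
proof -
  let ?R = "Rm q j (complex_of_real a)"
  note R = Rm_inverse[OF q, of j a]
  have Rd: "dim_row ?R = (j+1)*q" "dim_col ?R = (j+1)*q" using R(1) by auto
  have "adj ?R * (adj (pencil q j a) * shift_emb q j) = adj (pencil q j a * ?R) * shift_emb q j"
    using Rd by (simp add: adj_mult_dims assoc_mult_mat_dims)
  hence "adj ?R * (adj (pencil q j a) * shift_emb q j) = shift_emb q j" using R(2) by simp
  hence "adj (ut1 q b s j) * adj ?R * (adj (pencil q j a) * shift_emb q j)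
      = adj (adj (shift_emb q j) * ut1 q b s j)"
    using Rd by (simp add: adj_mult_dims assoc_mult_mat_dims)
  also have "adj (shift_emb q j) * ut1 q b s j = - (adj (top_emb q j) * kcol q b s j)"
    by (rule adj_shift_emb_ut1[where s=s and j=j, OF q s])
  also have "adj (- (adj (top_emb q j) * kcol q b s j)) = - (adj (kcol q b s j) * top_emb q j)"
    by (simp add: adj_uminus adj_mult_dims)
  also have "adj (kcol q b s j) = adj (vv q j) * K1 q b s j"
    unfolding K1_mult_vv[OF q, symmetric] using K_herm by (simp add: adj_mult_dims)
  finally show ?thesis unfolding shift_pencil_def .
qed

section \<open>The Blaschke--Potapov factors\<close>

locale hausdorff_moments =
  fixes q n :: nat and a b :: real and s :: "nat \<Rightarrow> complex mat"
  assumes q_pos: "0 < q" and n_pos: "1 \<le> n"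
    and s_herm: "\<And>l. l \<le> 2*n+1 \<Longrightarrow> s l \<in> carrier_mat q q \<and> adj (s l) = s l"
    and aniso_K1_n: "aniso_herm ((n+1)*q) (K1 q b s n)"
    and aniso_H2_n: "aniso_herm (n*q) (H2 q a b s (n-1))"
begin

lemma s_carrier: "l \<le> 2*n+1 \<Longrightarrow> s l \<in> carrier_mat q q"
  using s_herm by blast

lemma aniso_K1: "j \<le> n \<Longrightarrow> aniso_herm ((j+1)*q) (K1 q b s j)"
  using aniso_herm_leading_block[OF aniso_K1_n[unfolded K1_hankel], of "j+1"]
  unfolding K1_hankel by simp

lemma aniso_H2: "j < n \<Longrightarrow> aniso_herm ((j+1)*q) (H2 q a b s j)"
proof -
  assume j: "j < n"
  have "n - 1 + 1 = n" using n_pos by simp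
  hence "aniso_herm (n*q) (bmat q n n (\<lambda>l k. shat a b s (l+k)))"
    using aniso_H2_n unfolding H2_def by simp
  from aniso_herm_leading_block[OF this, of "j+1"] j show ?thesis unfolding H2_def by simp
qed

lemma K1_herm: "j \<le> n \<Longrightarrow> adj (K1 q b s j) = K1 q b s j"
  using aniso_K1 by (simp add: aniso_herm_def)

lemma H2_herm: "j < n \<Longrightarrow> adj (H2 q a b s j) = H2 q a b s j"
  using aniso_H2 by (simp add: aniso_herm_def)

lemma K1_schur:
  assumes j: "1 \<le> j" "j \<le> n"
  shows "schur_complement (j*q) q (K1 q b s (j-1)) (Yt1 q b s j) (kseq b s (2*j))"
    and "K1 q b s j = four_block_mat (K1 q b s (j-1)) (Yt1 q b s j) (adj (Yt1 q b s j)) (kseq b s (2*j))"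
proof -
  have mc: "\<And>l. l \<le> 2*j \<Longrightarrow> kseq b s l \<in> carrier_mat q q \<and> adj (kseq b s l) = kseq b s l"
  proof -
    fix l assume "l \<le> 2*j"
    hence "l + 1 \<le> 2*n+1" using j by simp
    thus "kseq b s l \<in> carrier_mat q q \<and> adj (kseq b s l) = kseq b s l"
      using kseq_herm[of s l q b] s_herm[of l] s_herm[of "l+1"] by simp
  qed
  have eA: "K1 q b s (j-1) = bmat q j j (\<lambda>l k. kseq b s (l+k))" unfolding K1_hankel using j by simp
  have eY: "Yt1 q b s j = bcol q j (\<lambda>l. kseq b s (j+l))" unfolding Yt1_def kseq_def by (simp add: add.assoc)
  show "schur_complement (j*q) q (K1 q b s (j-1)) (Yt1 q b s j) (kseq b s (2*j))"
    unfolding eA eY using aniso_K1[OF j(2)]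
    by (intro hankel_schur_complement[where m="kseq b s" and j=j, OF q_pos mc]) (simp_all add: K1_hankel)
  show "K1 q b s j = four_block_mat (K1 q b s (j-1)) (Yt1 q b s j) (adj (Yt1 q b s j)) (kseq b s (2*j))"
    unfolding eA eY unfolding K1_hankel by (rule hankel_four_block[where m="kseq b s" and j=j, OF q_pos mc])
qed

lemma H2_schur:
  assumes j: "1 \<le> j" "j < n"
  shows "schur_complement (j*q) q (H2 q a b s (j-1)) (Y2 q a b s j) (shat a b s (2*j))"
    and "H2 q a b s j = four_block_mat (H2 q a b s (j-1)) (Y2 q a b s j) (adj (Y2 q a b s j)) (shat a b s (2*j))"
proof -
  have mc: "\<And>l. l \<le> 2*j \<Longrightarrow> shat a b s l \<in> carrier_mat q q \<and> adj (shat a b s l) = shat a b s l"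
  proof -
    fix l assume "l \<le> 2*j"
    hence "l + 2 \<le> 2*n+1" using j by simp
    thus "shat a b s l \<in> carrier_mat q q \<and> adj (shat a b s l) = shat a b s l"
      using shat_herm[of s l q a b] s_herm[of l] s_herm[of "l+1"] s_herm[of "l+2"] by simp
  qed
  have eA: "H2 q a b s (j-1) = bmat q j j (\<lambda>l k. shat a b s (l+k))" unfolding H2_def using j by simp
  show "schur_complement (j*q) q (H2 q a b s (j-1)) (Y2 q a b s j) (shat a b s (2*j))"
    unfolding eA Y2_def using aniso_H2[OF j(2)]
    by (intro hankel_schur_complement[where m="shat a b s" and j=j, OF q_pos mc]) (simp_all add: H2_def)
  show "H2 q a b s j = four_block_mat (H2 q a b s (j-1)) (Y2 q a b s j) (adj (Y2 q a b s j)) (shat a b s (2*j))"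
    unfolding eA Y2_def unfolding H2_def by (rule hankel_four_block[where m="shat a b s" and j=j, OF q_pos mc])
qed

lemma H2_prev_eq:
  assumes j: "1 \<le> j" "j \<le> n"
  shows "H2 q a b s (j-1) = adj (shift_pencil q j a) * K1 q b s j * top_emb q j"
proof -
  let ?B = "shift_pencil q j a"
  have sK: "\<And>l. l \<le> 2*j+1 \<Longrightarrow> s l \<in> carrier_mat q q" using s_carrier j by simp
  have compress: "H2 q a b s (j-1) = adj (top_emb q j) * (K1 q b s j * ?B)"
  proof -
    have "H2 q a b s (j-1) = bmat q j j (\<lambda>l k. shat a b s (l+k))" unfolding H2_def using j by simp
    also have "\<dots> = adj (top_emb q j) * H2 q a b s j * top_emb q j"
      unfolding top_emb_def H2_def by (rule bmat_compress[symmetric]) simp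
    also have "\<dots> = adj (top_emb q j) * (H2 q a b s j * top_emb q j)"
      by (rule assoc_mult_mat_dims) simp_all
    finally show ?thesis using K1_shift_pencil[where s=s and j=j and a=a and b=b, OF q_pos sK] by simp
  qed
  have "H2 q a b s (j-1) = adj (H2 q a b s (j-1))" using H2_herm[of "j-1"] j by simp
  also have "\<dots> = adj (K1 q b s j * ?B) * top_emb q j"
    unfolding compress by (simp add: adj_mult_dims)
  also have "adj (K1 q b s j * ?B) = adj ?B * K1 q b s j"
    using K1_herm[OF j(2)] by (simp add: adj_mult_dims)
  finally show ?thesis .
qed

end

locale odd_index = hausdorff_moments +
  fixes j :: nat
  assumes j_pos: "1 \<le> j" and j_le: "j \<le> n"
begin

sublocale K: schur_complement "j*q" q "K1 q b s (j-1)" "Yt1 q b s j" "kseq b s (2*j)"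
  by (rule K1_schur(1)[OF j_pos j_le])

abbreviation Gam :: "complex mat" where "Gam \<equiv> Gam1 q b s j (complex_of_real a)"

abbreviation Theta :: "complex mat" where "Theta \<equiv> The1 q b s j (complex_of_real a)"

abbreviation R :: "complex mat" where "R \<equiv> Rm q j (complex_of_real a)"

lemma K1_eq_M: "K1 q b s j = K.M"
  by (rule K1_schur(2)[OF j_pos j_le])

lemma Khat1_eq_S: "Khat1 q b s j = K.S"
  using j_pos by (simp add: Khat1_def kseq_def)

lemma R_carrier: "R \<in> carrier_mat ((j+1)*q) ((j+1)*q)"
  using Rm_inverse(1)[OF q_pos] .

lemma Gam_eq: "Gam = K.L * powcol q j a"
proof -
  have "Gam = K.L * R * vv q j" unfolding Gam1_def using j_pos by simp
  also have "\<dots> = K.L * (R * vv q j)"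
    using K.L_carrier R_carrier by (simp add: assoc_mult_mat_dims carrier_matD)
  finally show ?thesis unfolding Rm_vv[OF q_pos] .
qed

lemma Theta_eq: "Theta = K.L * R * ut1 q b s j"
  unfolding The1_def using j_pos by simp

lemma Gam_carrier: "Gam \<in> carrier_mat q q"
  unfolding Gam_eq using K.L_carrier by simp

lemma Theta_carrier: "Theta \<in> carrier_mat q q"
  unfolding Theta_eq using K.L_carrier R_carrier by simp

lemma mbold_eq: "mbold q a b s j = adj Gam * minv (Khat1 q b s j) * Gam"
proof -
  define x' where "x' = powcol q (j-1) a"
  have x'c: "x' \<in> carrier_mat (j*q) q" unfolding x'_def by (rule carrier_matI) (use j_pos in simp_all)
  have xsplit: "powcol q j a = x' @\<^sub>r (complex_of_real a ^ j \<cdot>\<^sub>m 1\<^sub>m q)"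
  proof -
    have "powcol q j a = bcol q j (\<lambda>l. complex_of_real a ^ l \<cdot>\<^sub>m 1\<^sub>m q) @\<^sub>r (complex_of_real a ^ j \<cdot>\<^sub>m 1\<^sub>m q)"
      unfolding powcol_def by (rule bcol_split[OF q_pos]) simp
    also have "bcol q j (\<lambda>l. complex_of_real a ^ l \<cdot>\<^sub>m 1\<^sub>m q) = x'"
      unfolding x'_def powcol_def using j_pos by simp
    finally show ?thesis .
  qed
  have K_inv: "invertible_mat (K1 q b s j)" by (rule aniso_herm_invertible[OF aniso_K1[OF j_le]])
  have "mu q a b s j = adj x' * minv (K1 q b s (j-1)) * x' + adj Gam * minv K.S * Gam"
    unfolding mu_eq[OF q_pos K_inv] Gam_eq xsplit K1_eq_M
    by (rule K.quadratic_form_minv_M[OF x'c]) simp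
  moreover have "mu q a b s (j-1) = adj x' * minv (K1 q b s (j-1)) * x'"
    unfolding x'_def by (rule mu_eq[OF q_pos K.A_invertible])
  moreover have "adj x' * minv (K1 q b s (j-1)) * x' \<in> carrier_mat q q"
    using x'c K.minv_A by simp
  moreover have "adj Gam * minv K.S * Gam \<in> carrier_mat q q"
    using Gam_carrier K.minv_S by simp
  ultimately show ?thesis
    unfolding mbold_def Khat1_eq_S using j_pos by (simp add: add_diff_cancel_left_mat)
qed

lemma K1_herm_j: "adj (K1 q b s j) = K1 q b s j"
  by (rule K1_herm[OF j_le])

lemma L_K1_top_emb: "K.L * K1 q b s j * top_emb q j = 0\<^sub>m q (j*q)"
  unfolding K1_eq_M top_emb_eq_append_rows by (rule K.L_M_top_zero)

lemma L_dims: "dim_row K.L = q" "dim_col K.L = q + j*q"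
  using K.L_carrier by auto

lemma R_dims: "dim_row R = q + j*q" "dim_col R = q + j*q"
  using R_carrier by auto

lemma Gam_invertible: "invertible_mat Gam"
proof -
  let ?B = "shift_pencil q j a"
  let ?H' = "H2 q a b s (j-1)"
  have Bc: "?B \<in> carrier_mat ((j+1)*q) (j*q)" by (rule shift_pencil_carrier)
  have aniso_H': "aniso_herm (j*q) ?H'" using aniso_H2[of "j-1"] j_pos j_le by simp
  have "invertible_mat (adj Gam)"
  proof (rule invertible_if_trivial_kernel)
    show "adj Gam \<in> carrier_mat q q" using Gam_carrier by simp
    fix X assume X: "X \<in> carrier_mat q 1" "adj Gam * X = 0\<^sub>m q 1"
    have Xd: "dim_row X = q" "dim_col X = 1" using X by auto
    define ll where "ll = adj K.L * X"
    have llc: "ll \<in> carrier_mat ((j+1)*q) 1" unfolding ll_def using L_dims Xd by (intro carrier_matI) auto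
    have "adj (powcol q j a) * ll = adj Gam * X"
      unfolding ll_def Gam_eq using L_dims Xd by (simp add: assoc_mult_mat_dims adj_mult_dims)
    hence x_ll: "adj (powcol q j a) * ll = 0\<^sub>m q 1" using X by simp
    define rho where "rho = adj (shift_emb q j) * adj R * ll"
    have rhoc: "rho \<in> carrier_mat (j*q) 1" unfolding rho_def using llc R_dims by (intro carrier_matI) auto
    have ll_eq: "ll = ?B * rho"
    proof -
      have "ll = vv q j * (adj (powcol q j a) * ll) + ?B * rho"
        unfolding rho_def by (rule pencil_decomposition[OF q_pos llc])
      also have "vv q j * (adj (powcol q j a) * ll) = 0\<^sub>m ((j+1)*q) 1" unfolding x_ll by simp
      finally show ?thesis using Bc rhoc by simp
    qed
    have "adj rho * ?H' * rho = adj (?B * rho) * (K1 q b s j * (top_emb q j * rho))"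
      unfolding H2_prev_eq[OF j_pos j_le] using Bc rhoc by (simp add: assoc_mult_mat_dims adj_mult_dims)
    also have "adj (?B * rho) = adj X * K.L"
      unfolding ll_eq[symmetric] ll_def using L_dims Xd by (simp add: adj_mult_dims)
    also have "adj X * K.L * (K1 q b s j * (top_emb q j * rho)) = adj X * ((K.L * K1 q b s j * top_emb q j) * rho)"
      using L_dims Xd rhoc by (simp add: assoc_mult_mat_dims)
    also have "\<dots> = 0\<^sub>m 1 1" unfolding L_K1_top_emb using Xd rhoc by simp
    finally have "rho = 0\<^sub>m (j*q) 1" using aniso_H' rhoc unfolding aniso_herm_def by auto
    hence "adj K.L * X = 0\<^sub>m (j*q + q) 1" using ll_eq Bc unfolding ll_def by (simp add: add.commute)
    thus "X = 0\<^sub>m q 1" by (rule K.adj_L_injective[OF X(1)])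
  qed
  thus ?thesis by (rule invertible_if_adj_invertible[OF _ Gam_carrier])
qed

definition rhoK :: "complex mat" where "rhoK = adj (shift_emb q j) * adj R * adj K.L"

lemma rhoK_carrier: "rhoK \<in> carrier_mat (j*q) q"
  unfolding rhoK_def using L_dims R_dims by (intro carrier_matI) auto

lemma adj_L_decomposition: "adj K.L = vv q j * adj Gam + shift_pencil q j a * rhoK"
proof -
  have "adj K.L \<in> carrier_mat ((j+1)*q) q" using L_dims by (intro carrier_matI) auto
  from pencil_decomposition[OF q_pos this, of a]
  have "adj K.L = vv q j * (adj (powcol q j a) * adj K.L) + shift_pencil q j a * rhoK"
    unfolding rhoK_def .
  moreover have "adj (powcol q j a) * adj K.L = adj Gam"
    unfolding Gam_eq using L_dims by (simp add: adj_mult_dims)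
  ultimately show ?thesis by simp
qed

lemma adj_Theta_eq: "adj Theta = s 0 * adj Gam - adj (vv q j) * K1 q b s j * top_emb q j * rhoK"
proof -
  let ?U = "adj (ut1 q b s j) * adj R"
  let ?E = "adj (vv q j) * K1 q b s j * top_emb q j"
  have s0: "s 0 \<in> carrier_mat q q" "adj (s 0) = s 0" using s_herm[of 0] by auto
  have sj: "\<And>l. l \<le> j \<Longrightarrow> s l \<in> carrier_mat q q" using s_carrier j_le by simp
  have f1: "?U * vv q j = s 0"
    by (rule adj_ut1_Rm_vv[where s=s and j=j and a=a and b=b, OF q_pos s0])
  have f2: "?U * shift_pencil q j a = - ?E"
    by (rule adj_ut1_Rm_shift[where s=s and j=j and a=a and b=b, OF q_pos sj K1_herm_j])
  have c1: "?U \<in> carrier_mat q ((j+1)*q)" using R_dims by (intro carrier_matI) auto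
  have c2: "vv q j * adj Gam \<in> carrier_mat ((j+1)*q) q" using Gam_carrier by (intro carrier_matI) auto
  have c3: "shift_pencil q j a * rhoK \<in> carrier_mat ((j+1)*q) q" using rhoK_carrier by simp
  have "adj Theta = ?U * adj K.L"
    unfolding Theta_eq using L_dims R_dims by (simp add: adj_mult_dims)
  also have "\<dots> = ?U * (vv q j * adj Gam) + ?U * (shift_pencil q j a * rhoK)"
    unfolding adj_L_decomposition by (rule mult_add_distrib_mat[OF c1 c2 c3])
  also have "?U * (vv q j * adj Gam) = s 0 * adj Gam"
    unfolding f1[symmetric] using c1 Gam_carrier by (simp add: assoc_mult_mat_dims)
  also have "?U * (shift_pencil q j a * rhoK) = (?U * shift_pencil q j a) * rhoK"
    by (rule assoc_mult_mat[symmetric]) (use c1 rhoK_carrier in auto)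
  also have "\<dots> = - (?E * rhoK)" unfolding f2 using rhoK_carrier by simp
  also have "s 0 * adj Gam + - (?E * rhoK) = s 0 * adj Gam - ?E * rhoK"
  proof -
    have "?E * rhoK \<in> carrier_mat q q" using rhoK_carrier by (intro carrier_matI) auto
    moreover have "s 0 * adj Gam \<in> carrier_mat q q" using s0 Gam_carrier by (intro carrier_matI) auto
    ultimately show ?thesis using add_uminus_minus_mat by metis
  qed
  finally show ?thesis .
qed

lemma Gam_adj_Theta_eq: "Gam * adj Theta = Gam * s 0 * adj Gam + adj rhoK * H2 q a b s (j-1) * rhoK"
proof -
  let ?B = "shift_pencil q j a"
  let ?KJ = "K1 q b s j * top_emb q j * rhoK"
  have s0: "s 0 \<in> carrier_mat q q" using s_carrier by simp
  define H' where "H' = H2 q a b s (j-1)"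
  have H'c: "H' \<in> carrier_mat (j*q) (j*q)" unfolding H'_def using H2_carrier[of q a b s "j-1"] j_pos by simp
  have KJc: "?KJ \<in> carrier_mat ((j+1)*q) q" using rhoK_carrier by (intro carrier_matI) auto
  define U where "U = Gam * adj (vv q j) * ?KJ"
  define V where "V = adj rhoK * H' * rhoK"
  define W where "W = Gam * s 0 * adj Gam"
  have Uc: "U \<in> carrier_mat q q" unfolding U_def using Gam_carrier KJc by (intro carrier_matI) auto
  have Vc: "V \<in> carrier_mat q q" unfolding V_def using H'c rhoK_carrier by (intro carrier_matI) auto
  have Wc: "W \<in> carrier_mat q q" unfolding W_def using Gam_carrier s0 by (intro carrier_matI) auto
  have GT: "Gam * adj Theta = W - U"
  proof -
    have c1: "s 0 * adj Gam \<in> carrier_mat q q" using s0 Gam_carrier by (intro carrier_matI) auto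
    have c2: "adj (vv q j) * K1 q b s j * top_emb q j * rhoK \<in> carrier_mat q q"
      using rhoK_carrier by (intro carrier_matI) auto
    show ?thesis unfolding adj_Theta_eq mult_minus_distrib_mat[OF Gam_carrier c1 c2] W_def U_def
      using Gam_carrier s0 rhoK_carrier by (simp add: assoc_mult_mat_dims)
  qed
  txt \<open>\<open>U + V\<close> is \<open>K.L * K1 * top_emb * rhoK = 0\<close>, split along the decomposition of \<open>K.L\<close>.\<close>
  have UV: "U + V = 0\<^sub>m q q"
  proof -
    have Ld: "K.L = Gam * adj (vv q j) + adj rhoK * adj ?B"
      using arg_cong[OF adj_L_decomposition, of adj] Gam_carrier rhoK_carrier
      by (simp add: adj_mult_dims adj_add[of _ "(j+1)*q" q])
    have c1: "Gam * adj (vv q j) \<in> carrier_mat q ((j+1)*q)" using Gam_carrier by (intro carrier_matI) auto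
    have c2: "adj rhoK * adj ?B \<in> carrier_mat q ((j+1)*q)" using rhoK_carrier by (intro carrier_matI) auto
    have "K.L * ?KJ = (Gam * adj (vv q j)) * ?KJ + (adj rhoK * adj ?B) * ?KJ"
      unfolding Ld by (rule add_mult_distrib_mat[OF c1 c2 KJc])
    also have "\<dots> = U + V" unfolding U_def V_def H'_def H2_prev_eq[OF j_pos j_le]
      using Gam_carrier rhoK_carrier by (simp add: assoc_mult_mat_dims)
    finally have "U + V = K.L * ?KJ" ..
    also have "\<dots> = (K.L * K1 q b s j * top_emb q j) * rhoK"
      using L_dims rhoK_carrier by (simp add: assoc_mult_mat_dims)
    finally show ?thesis unfolding L_K1_top_emb using rhoK_carrier by simp
  qed
  show ?thesis unfolding GT diff_eq_add_if_sum_zero[OF Uc Vc Wc UV] unfolding W_def V_def H'_def ..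
qed

lemma Theta_Gam_herm: "Theta * adj Gam = Gam * adj Theta"
proof -
  have s0: "s 0 \<in> carrier_mat q q" "adj (s 0) = s 0" using s_herm[of 0] by auto
  define H' where "H' = H2 q a b s (j-1)"
  have H'c: "H' \<in> carrier_mat (j*q) (j*q)" and H'h: "adj H' = H'"
    using aniso_H2[of "j-1"] j_pos j_le unfolding aniso_herm_def H'_def by auto
  define V where "V = adj rhoK * H' * rhoK"
  define W where "W = Gam * s 0 * adj Gam"
  have Vc: "V \<in> carrier_mat q q" unfolding V_def using H'c rhoK_carrier by (intro carrier_matI) auto
  have Wc: "W \<in> carrier_mat q q" unfolding W_def using Gam_carrier s0 by (intro carrier_matI) auto
  have "adj W = W" unfolding W_def using Gam_carrier s0 by (simp add: adj_mult_dims assoc_mult_mat_dims)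
  moreover have "adj V = V" unfolding V_def using H'c H'h rhoK_carrier
    by (simp add: adj_mult_dims assoc_mult_mat_dims)
  moreover have "Theta * adj Gam = adj (Gam * adj Theta)"
    using Gam_carrier Theta_carrier by (simp add: adj_mult_dims)
  ultimately show ?thesis
    unfolding Gam_adj_Theta_eq H'_def[symmetric] V_def[symmetric] W_def[symmetric]
    using adj_add[OF Wc Vc] by simp
qed
end

locale even_index = hausdorff_moments +
  fixes j :: nat
  assumes j_pos: "1 \<le> j" and j_less: "j < n"
begin

sublocale H: schur_complement "j*q" q "H2 q a b s (j-1)" "Y2 q a b s j" "shat a b s (2*j)"
  by (rule H2_schur(1)[OF j_pos j_less])

abbreviation P :: "complex mat" where "P \<equiv> P2 q a b s j (complex_of_real a)"

abbreviation Q :: "complex mat" where "Q \<equiv> Q2 q a b s j (complex_of_real a)"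

abbreviation R :: "complex mat" where "R \<equiv> Rm q j (complex_of_real a)"

lemma H2_eq_M: "H2 q a b s j = H.M"
  by (rule H2_schur(2)[OF j_pos j_less])

lemma Hhat2_eq_S: "Hhat2 q a b s j = H.S"
  using j_pos by (simp add: Hhat2_def)

lemma s_carrier_j: "l \<le> j+1 \<Longrightarrow> s l \<in> carrier_mat q q"
  using s_carrier j_less by simp

lemma R_carrier: "R \<in> carrier_mat ((j+1)*q) ((j+1)*q)"
  using Rm_inverse(1)[OF q_pos] .

lemma L_dims: "dim_row H.L = q" "dim_col H.L = q + j*q"
  using H.L_carrier by auto

lemma R_dims: "dim_row R = q + j*q" "dim_col R = q + j*q"
  using R_carrier by auto

lemma K1_herm_j: "adj (K1 q b s j) = K1 q b s j"
  using K1_herm j_less by simp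

lemma P_eq: "P = H.L * powcol q j a"
proof -
  have "P = H.L * R * vv q j" unfolding P2_def using j_pos by simp
  also have "\<dots> = H.L * (R * vv q j)"
    using H.L_carrier R_carrier by (simp add: assoc_mult_mat_dims carrier_matD)
  finally show ?thesis unfolding Rm_vv[OF q_pos] .
qed

lemma Q_eq: "Q = H.L * kcol q b s j"
proof -
  let ?w = "u2 q a b s j + complex_of_real a \<cdot>\<^sub>m (vv q j * s 0)"
  have "Q = - (H.L * R * ?w)" unfolding Q2_def using j_pos by simp
  also have "\<dots> = - (H.L * (R * ?w))"
    using L_dims R_dims s_carrier_j[of 0] by (simp add: assoc_mult_mat_dims carrier_matD)
  also have "R * ?w = - kcol q b s j" by (rule Rm_u2[where s=s and j=j and a=a and b=b, OF q_pos s_carrier_j])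
  finally show ?thesis using L_dims by simp
qed

lemma P_carrier: "P \<in> carrier_mat q q"
  unfolding P_eq using H.L_carrier by simp

lemma Q_carrier: "Q \<in> carrier_mat q q"
  unfolding Q_eq using H.L_carrier by simp

lemma lbold_eq: "lbold q a b s j = adj Q * minv (Hhat2 q a b s j) * Q"
proof -
  define c' where "c' = kcol q b s (j-1)"
  have c'c: "c' \<in> carrier_mat (j*q) q" unfolding c'_def by (rule carrier_matI) (use j_pos in simp_all)
  have kc: "kseq b s j \<in> carrier_mat q q"
    using s_carrier_j[of j] s_carrier_j[of "j+1"] by (simp add: kseq_def minus_carrier_mat)
  have csplit: "kcol q b s j = c' @\<^sub>r kseq b s j"
  proof -
    have "kcol q b s j = bcol q j (kseq b s) @\<^sub>r kseq b s j"
      unfolding kcol_def by (rule bcol_split[where f="kseq b s", OF q_pos kc])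
    also have "bcol q j (kseq b s) = c'" unfolding c'_def kcol_def using j_pos by simp
    finally show ?thesis .
  qed
  have H_inv: "invertible_mat (H2 q a b s j)" by (rule aniso_herm_invertible[OF aniso_H2[OF j_less]])
  have lam_j: "lam q a b s j = adj (kcol q b s j) * minv (H2 q a b s j) * kcol q b s j"
    by (rule lam_eq[OF q_pos _ H_inv]) (rule s_carrier_j)
  have "lam q a b s j = adj c' * minv (H2 q a b s (j-1)) * c' + adj Q * minv H.S * Q"
    unfolding lam_j Q_eq csplit H2_eq_M by (rule H.quadratic_form_minv_M[OF c'c kc])
  moreover have "lam q a b s (j-1) = adj c' * minv (H2 q a b s (j-1)) * c'"
    unfolding c'_def by (rule lam_eq[where s=s and j="j-1" and a=a and b=b, OF q_pos _ H.A_invertible]) (use s_carrier_j j_pos in simp)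
  moreover have "adj c' * minv (H2 q a b s (j-1)) * c' \<in> carrier_mat q q"
    using c'c H.minv_A by simp
  moreover have "adj Q * minv H.S * Q \<in> carrier_mat q q"
    using Q_carrier H.minv_S by simp
  ultimately show ?thesis
    unfolding lbold_def Hhat2_eq_S using j_pos by (simp add: add_diff_cancel_left_mat)
qed

lemma L_H2_top_emb: "H.L * H2 q a b s j * top_emb q j = 0\<^sub>m q (j*q)"
  unfolding H2_eq_M top_emb_eq_append_rows by (rule H.L_M_top_zero)

lemma K1_shift_pencil_j: "K1 q b s j * shift_pencil q j a = H2 q a b s j * top_emb q j"
  by (rule K1_shift_pencil[where s=s and j=j and a=a and b=b, OF q_pos]) (use s_carrier j_less in simp)

lemma K1_shift_pencil_mult:
  assumes "X \<in> carrier_mat (j*q) k"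
  shows "K1 q b s j * (shift_pencil q j a * X) = H2 q a b s j * (top_emb q j * X)"
proof -
  have "K1 q b s j * (shift_pencil q j a * X) = (K1 q b s j * shift_pencil q j a) * X"
    by (rule assoc_mult_mat[symmetric]) (use assms in auto)
  also have "\<dots> = H2 q a b s j * (top_emb q j * X)"
    unfolding K1_shift_pencil_j by (rule assoc_mult_mat) (use assms in auto)
  finally show ?thesis .
qed

lemma Q_invertible: "invertible_mat Q"
proof -
  let ?B = "shift_pencil q j a"
  let ?K = "K1 q b s j"
  have aniso_K: "aniso_herm ((j+1)*q) ?K" using aniso_K1 j_less by simp
  have "invertible_mat (adj Q)"
  proof (rule invertible_if_trivial_kernel)
    show "adj Q \<in> carrier_mat q q" using Q_carrier by simp
    fix X assume X: "X \<in> carrier_mat q 1" "adj Q * X = 0\<^sub>m q 1"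
    have Xd: "dim_row X = q" "dim_col X = 1" using X by auto
    define ll where "ll = adj H.L * X"
    have llc: "ll \<in> carrier_mat ((j+1)*q) 1" unfolding ll_def using L_dims Xd by (intro carrier_matI) auto
    have "adj (vv q j) * ?K * ll = adj Q * X"
      unfolding ll_def Q_eq K1_mult_vv[OF q_pos, symmetric] using L_dims Xd K1_herm_j
      by (simp add: assoc_mult_mat_dims adj_mult_dims)
    hence v_ll: "adj (vv q j) * ?K * ll = 0\<^sub>m q 1" using X by simp
    define rho where "rho = adj (shift_emb q j) * adj R * ll"
    define z where "z = adj (powcol q j a) * ll"
    have rhoc: "rho \<in> carrier_mat (j*q) 1" unfolding rho_def using llc R_dims by (intro carrier_matI) auto
    have zc: "z \<in> carrier_mat q 1" unfolding z_def using llc by (intro carrier_matI) auto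
    have ll_eq: "ll = vv q j * z + ?B * rho"
      unfolding rho_def z_def by (rule pencil_decomposition[OF q_pos llc])
    have lKc: "adj ll * ?K \<in> carrier_mat 1 ((j+1)*q)" using llc by (intro carrier_matI) auto
    have "adj ll * ?K * ll = (adj ll * ?K) * (vv q j * z) + (adj ll * ?K) * (?B * rho)"
      using ll_eq mult_add_distrib_mat[OF lKc, of "vv q j * z" 1 "?B * rho"] zc rhoc by simp
    also have "(adj ll * ?K) * (vv q j * z) = adj (adj (vv q j) * ?K * ll) * z"
      using llc zc K1_herm_j by (simp add: assoc_mult_mat_dims adj_mult_dims carrier_matD)
    also have "\<dots> = 0\<^sub>m 1 1" unfolding v_ll using zc by simp
    also have "(adj ll * ?K) * (?B * rho) = adj X * ((H.L * H2 q a b s j * top_emb q j) * rho)"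
    proof -
      have "?K * (?B * rho) = H2 q a b s j * (top_emb q j * rho)"
        by (rule K1_shift_pencil_mult[OF rhoc])
      thus ?thesis unfolding ll_def using L_dims Xd rhoc
        by (simp add: assoc_mult_mat_dims adj_mult_dims carrier_matD)
    qed
    also have "\<dots> = 0\<^sub>m 1 1" unfolding L_H2_top_emb using Xd rhoc by simp
    finally have "ll = 0\<^sub>m ((j+1)*q) 1" using aniso_K llc unfolding aniso_herm_def by auto
    hence "adj H.L * X = 0\<^sub>m (j*q + q) 1" unfolding ll_def by (simp add: add.commute)
    thus "X = 0\<^sub>m q 1" by (rule H.adj_L_injective[OF X(1)])
  qed
  thus ?thesis by (rule invertible_if_adj_invertible[OF _ Q_carrier])
qed

definition rhoH :: "complex mat" where "rhoH = adj (shift_emb q j) * adj R * adj H.L"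

lemma rhoH_carrier: "rhoH \<in> carrier_mat (j*q) q"
  unfolding rhoH_def using L_dims R_dims by (intro carrier_matI) auto

lemma adj_L_decomposition: "adj H.L = vv q j * adj P + shift_pencil q j a * rhoH"
proof -
  have "adj H.L \<in> carrier_mat ((j+1)*q) q" using L_dims by (intro carrier_matI) auto
  from pencil_decomposition[OF q_pos this, of a]
  have "adj H.L = vv q j * (adj (powcol q j a) * adj H.L) + shift_pencil q j a * rhoH"
    unfolding rhoH_def .
  moreover have "adj (powcol q j a) * adj H.L = adj P"
    unfolding P_eq using L_dims by (simp add: adj_mult_dims)
  ultimately show ?thesis by simp
qed

lemma adj_Q_eq:
  "adj Q = adj (vv q j) * K1 q b s j * vv q j * adj P + adj (vv q j) * H2 q a b s j * top_emb q j * rhoH"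
proof -
  let ?V = "adj (vv q j) * K1 q b s j"
  have c1: "?V \<in> carrier_mat q ((j+1)*q)" by (intro carrier_matI) auto
  have c2: "vv q j * adj P \<in> carrier_mat ((j+1)*q) q" using P_carrier by (intro carrier_matI) auto
  have c3: "shift_pencil q j a * rhoH \<in> carrier_mat ((j+1)*q) q" using rhoH_carrier by simp
  have "adj Q = ?V * adj H.L"
    unfolding Q_eq K1_mult_vv[OF q_pos, symmetric] using L_dims K1_herm_j
    by (simp add: adj_mult_dims)
  also have "\<dots> = ?V * (vv q j * adj P) + ?V * (shift_pencil q j a * rhoH)"
    unfolding adj_L_decomposition by (rule mult_add_distrib_mat[OF c1 c2 c3])
  also have "?V * (vv q j * adj P) = ?V * vv q j * adj P"
    using P_carrier by (simp add: assoc_mult_mat_dims carrier_matD)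
  also have "?V * (shift_pencil q j a * rhoH) = adj (vv q j) * H2 q a b s j * top_emb q j * rhoH"
    using rhoH_carrier by (simp add: assoc_mult_mat_dims K1_shift_pencil_mult)
  finally show ?thesis .
qed

lemma P_adj_Q_eq:
  "P * adj Q = P * (adj (vv q j) * K1 q b s j * vv q j) * adj P
    - adj rhoH * adj (shift_pencil q j a) * K1 q b s j * shift_pencil q j a * rhoH"
proof -
  let ?K = "K1 q b s j"
  let ?H = "H2 q a b s j"
  let ?B = "shift_pencil q j a"
  let ?HJ = "?H * top_emb q j * rhoH"
  define c0 where "c0 = adj (vv q j) * ?K * vv q j"
  have c0c: "c0 \<in> carrier_mat q q" unfolding c0_def by (intro carrier_matI) auto
  have HJc: "?HJ \<in> carrier_mat ((j+1)*q) q" using rhoH_carrier by (intro carrier_matI) auto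
  define U where "U = P * adj (vv q j) * ?HJ"
  define V where "V = adj rhoH * adj ?B * ?K * ?B * rhoH"
  define W where "W = P * c0 * adj P"
  have Uc: "U \<in> carrier_mat q q" unfolding U_def using P_carrier HJc by (intro carrier_matI) auto
  have Vc: "V \<in> carrier_mat q q" unfolding V_def using rhoH_carrier by (intro carrier_matI) auto
  have Wc: "W \<in> carrier_mat q q" unfolding W_def using P_carrier c0c by (intro carrier_matI) auto
  have PQ: "P * adj Q = W + U"
  proof -
    have c1: "c0 * adj P \<in> carrier_mat q q" using c0c P_carrier by (intro carrier_matI) auto
    have c2: "adj (vv q j) * ?H * top_emb q j * rhoH \<in> carrier_mat q q"
      using rhoH_carrier by (intro carrier_matI) auto
    show ?thesis unfolding adj_Q_eq c0_def[symmetric] mult_add_distrib_mat[OF P_carrier c1 c2] W_def U_def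
      using P_carrier c0c rhoH_carrier by (simp add: assoc_mult_mat_dims carrier_matD)
  qed
  txt \<open>\<open>U + V\<close> is \<open>H.L * H2 * top_emb * rhoH\<close>, split along the decomposition of \<open>H.L\<close>.\<close>
  have UV: "U + V = 0\<^sub>m q q"
  proof -
    have Ld: "H.L = P * adj (vv q j) + adj rhoH * adj ?B"
      using arg_cong[OF adj_L_decomposition, of adj] P_carrier rhoH_carrier
      by (simp add: adj_mult_dims adj_add[of _ "(j+1)*q" q])
    have c1: "P * adj (vv q j) \<in> carrier_mat q ((j+1)*q)" using P_carrier by (intro carrier_matI) auto
    have c2: "adj rhoH * adj ?B \<in> carrier_mat q ((j+1)*q)" using rhoH_carrier by (intro carrier_matI) auto
    have "H.L * ?HJ = (P * adj (vv q j)) * ?HJ + (adj rhoH * adj ?B) * ?HJ"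
      unfolding Ld by (rule add_mult_distrib_mat[OF c1 c2 HJc])
    also have "\<dots> = U + V" unfolding U_def V_def
      using P_carrier rhoH_carrier by (simp add: assoc_mult_mat_dims K1_shift_pencil_mult)
    finally have "U + V = H.L * ?HJ" ..
    also have "\<dots> = (H.L * ?H * top_emb q j) * rhoH"
      using L_dims rhoH_carrier by (simp add: assoc_mult_mat_dims)
    finally show ?thesis unfolding L_H2_top_emb using rhoH_carrier by simp
  qed
  show ?thesis unfolding PQ add_eq_diff_if_sum_zero[OF Uc Vc Wc UV] unfolding W_def V_def c0_def ..
qed

lemma P_Q_herm: "P * adj Q = Q * adj P"
proof -
  let ?K = "K1 q b s j"
  let ?B = "shift_pencil q j a"
  define c0 where "c0 = adj (vv q j) * ?K * vv q j"
  have c0c: "c0 \<in> carrier_mat q q" unfolding c0_def by (intro carrier_matI) auto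
  have c0h: "adj c0 = c0" unfolding c0_def using K1_herm_j by (simp add: adj_mult_dims assoc_mult_mat_dims)
  define V where "V = adj rhoH * adj ?B * ?K * ?B * rhoH"
  define W where "W = P * c0 * adj P"
  have Vc: "V \<in> carrier_mat q q" unfolding V_def using rhoH_carrier by (intro carrier_matI) auto
  have Wc: "W \<in> carrier_mat q q" unfolding W_def using P_carrier c0c by (intro carrier_matI) auto
  have "adj W = W" unfolding W_def using P_carrier c0c c0h
    by (simp add: adj_mult_dims assoc_mult_mat_dims carrier_matD)
  moreover have "adj V = V" unfolding V_def using rhoH_carrier K1_herm_j
    by (simp add: adj_mult_dims assoc_mult_mat_dims carrier_matD)
  moreover have "Q * adj P = adj (P * adj Q)"
    using P_carrier Q_carrier by (simp add: adj_mult_dims)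
  ultimately show ?thesis
    unfolding P_adj_Q_eq c0_def[symmetric] V_def[symmetric] W_def[symmetric]
    using adj_minus[OF Wc Vc] by simp
qed
end

context hausdorff_moments
begin

lemma kseq_0: "kseq b s 0 \<in> carrier_mat q q" "adj (kseq b s 0) = kseq b s 0"
  using kseq_herm[of s 0 q b] s_herm[of 0] s_herm[of 1] by auto

lemma K1_0: "K1 q b s 0 = kseq b s 0"
  unfolding K1_hankel using bmat_1_1[OF q_pos, of "\<lambda>l k. kseq b s (l+k)"] kseq_0 by simp

lemma Khat1_0: "Khat1 q b s 0 = kseq b s 0"
  unfolding Khat1_def kseq_def by simp

lemma kseq_0_invertible: "invertible_mat (kseq b s 0)"
  using aniso_herm_invertible[OF aniso_K1[of 0]] unfolding K1_0 by simp

lemma odd_factor_data: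
  assumes "j \<le> n"
  defines "G \<equiv> Gam1 q b s j (complex_of_real a)" and "T \<equiv> The1 q b s j (complex_of_real a)"
  shows "G \<in> carrier_mat q q \<and> T \<in> carrier_mat q q \<and> minv (Khat1 q b s j) \<in> carrier_mat q q
    \<and> invertible_mat G \<and> mbold q a b s j = adj G * minv (Khat1 q b s j) * G \<and> T * adj G = G * adj T"
proof (cases "j = 0")
  case True
  have G: "G = 1\<^sub>m q" and T: "T = s 0" unfolding G_def T_def Gam1_def The1_def True by simp_all
  have s0: "s 0 \<in> carrier_mat q q" "adj (s 0) = s 0" using s_herm[of 0] by auto
  have "powcol q 0 a = 1\<^sub>m q"
  proof -
    have "(1::complex) \<cdot>\<^sub>m 1\<^sub>m q = 1\<^sub>m q" by (rule eq_matI) auto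
    thus ?thesis unfolding powcol_def
      using bcol_1_eq[OF q_pos, of "\<lambda>l. complex_of_real a ^ l \<cdot>\<^sub>m 1\<^sub>m q"] by simp
  qed
  hence "mbold q a b s 0 = minv (kseq b s 0)"
    using mu_eq[OF q_pos, of b s 0 a] kseq_0_invertible minv_inverse(1)[OF kseq_0_invertible kseq_0(1)]
    unfolding mbold_def K1_0 by simp
  thus ?thesis unfolding True G T Khat1_0
    using s0 minv_inverse(1)[OF kseq_0_invertible kseq_0(1)] invertible_one_mat by simp
next
  case False
  interpret odd_index q n a b s j by unfold_locales (use False assms in simp_all)
  show ?thesis unfolding G_def T_def Khat1_eq_S
    using Gam_carrier Theta_carrier K.minv_S(1) Gam_invertible mbold_eq[unfolded Khat1_eq_S] Theta_Gam_herm
    by blast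
qed

lemma dodd_factorization:
  assumes "j \<le> n"
  defines "G \<equiv> Gam1 q b s j (complex_of_real a)" and "T \<equiv> The1 q b s j (complex_of_real a)"
  shows "invertible_mat G"
    and "dodd q a b s j z = (let r = minv G * T
           in blk2 (1\<^sub>m q) r (0\<^sub>m q q) (1\<^sub>m q)
            * blk2 (1\<^sub>m q) (0\<^sub>m q q) (- ((z - complex_of_real a) \<cdot>\<^sub>m mbold q a b s j)) (1\<^sub>m q)
            * blk2 (1\<^sub>m q) (- r) (0\<^sub>m q q) (1\<^sub>m q))"
proof -
  note data = odd_factor_data[OF assms(1), folded G_def T_def]
  show "invertible_mat G" using data by blast
  show "dodd q a b s j z = (let r = minv G * T
           in blk2 (1\<^sub>m q) r (0\<^sub>m q q) (1\<^sub>m q)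
            * blk2 (1\<^sub>m q) (0\<^sub>m q q) (- ((z - complex_of_real a) \<cdot>\<^sub>m mbold q a b s j)) (1\<^sub>m q)
            * blk2 (1\<^sub>m q) (- r) (0\<^sub>m q q) (1\<^sub>m q))"
    unfolding dodd_def Let_def G_def[symmetric] T_def[symmetric]
    by (rule block_conj_upper) (use data in auto)
qed

lemma even_factor_data:
  assumes "j < n"
  defines "P \<equiv> P2 q a b s j (complex_of_real a)" and "Q \<equiv> Q2 q a b s j (complex_of_real a)"
  shows "P \<in> carrier_mat q q \<and> Q \<in> carrier_mat q q \<and> minv (Hhat2 q a b s j) \<in> carrier_mat q q
    \<and> invertible_mat Q \<and> lbold q a b s j = adj Q * minv (Hhat2 q a b s j) * Q \<and> P * adj Q = Q * adj P"
proof (cases "j = 0")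
  case True
  have s012: "s 0 \<in> carrier_mat q q" "s 1 \<in> carrier_mat q q" "s 2 \<in> carrier_mat q q"
    using s_carrier n_pos by auto
  have P: "P = 1\<^sub>m q" unfolding P_def P2_def True by simp
  have Q: "Q = kseq b s 0"
    unfolding Q_def Q2_def u20_def kseq_def True by (rule eq_matI) (use s012 in \<open>auto simp: algebra_simps\<close>)
  have sh: "shat a b s 0 \<in> carrier_mat q q"
    using shat_herm[of s 0 q a b] s_herm[of 0] s_herm[of 1] s_herm[of 2] n_pos by (auto simp: numeral_2_eq_2)
  have eH: "H2 q a b s 0 = shat a b s 0"
    unfolding H2_def using bmat_1_1[OF q_pos, of "\<lambda>l k. shat a b s (l+k)"] sh by simp
  have eHh: "Hhat2 q a b s 0 = shat a b s 0" unfolding Hhat2_def by simp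
  have H_inv: "invertible_mat (H2 q a b s 0)" using aniso_herm_invertible[OF aniso_H2[of 0]] n_pos by simp
  have ec: "kcol q b s 0 = kseq b s 0"
    unfolding kcol_def using bcol_1_eq[OF q_pos, of "kseq b s"] kseq_0 by simp
  have "lbold q a b s 0 = adj (kcol q b s 0) * minv (H2 q a b s 0) * kcol q b s 0"
    unfolding lbold_def by (simp, rule lam_eq[OF q_pos _ H_inv]) (use s012 in \<open>auto simp: le_Suc_eq\<close>)
  thus ?thesis unfolding True P Q eHh ec eH[symmetric]
    using kseq_0 kseq_0_invertible minv_inverse(1)[OF H_inv, of q] H2_carrier[of q a b s 0] by simp
next
  case False
  interpret even_index q n a b s j by unfold_locales (use False assms in simp_all)
  show ?thesis unfolding P_def Q_def Hhat2_eq_S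
    using P_carrier Q_carrier H.minv_S(1) Q_invertible lbold_eq[unfolded Hhat2_eq_S] P_Q_herm
    by blast
qed

lemma deven_factorization:
  assumes "j < n"
  defines "P \<equiv> P2 q a b s j (complex_of_real a)" and "Q \<equiv> Q2 q a b s j (complex_of_real a)"
  shows "invertible_mat Q"
    and "deven q a b s j z = (let t = minv Q * P
           in blk2 (1\<^sub>m q) (0\<^sub>m q q) (- t) (1\<^sub>m q)
            * blk2 (1\<^sub>m q) ((z - complex_of_real a) \<cdot>\<^sub>m lbold q a b s j) (0\<^sub>m q q) (1\<^sub>m q)
            * blk2 (1\<^sub>m q) (0\<^sub>m q q) t (1\<^sub>m q))"
proof -
  note data = even_factor_data[OF assms(1), folded P_def Q_def]
  show "invertible_mat Q" using data by blast
  show "deven q a b s j z = (let t = minv Q * P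
           in blk2 (1\<^sub>m q) (0\<^sub>m q q) (- t) (1\<^sub>m q)
            * blk2 (1\<^sub>m q) ((z - complex_of_real a) \<cdot>\<^sub>m lbold q a b s j) (0\<^sub>m q q) (1\<^sub>m q)
            * blk2 (1\<^sub>m q) (0\<^sub>m q q) t (1\<^sub>m q))"
    unfolding deven_def Let_def P_def[symmetric] Q_def[symmetric]
    by (rule block_conj_lower) (use data in auto)
qed

end

theorem mainTheorem5:
  fixes q n :: nat and a b :: real and s :: "nat \<Rightarrow> complex mat"
  assumes "q \<ge> 1" and "n \<ge> 1" and "a < b"
    and "\<And>j. j \<le> 2*n+1 \<Longrightarrow> s j \<in> carrier_mat q q \<and> adj (s j) = s j"
    and "pos_def (H1 q s n)" and "pos_def (H2 q a b s (n-1))"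
    and "pos_def (K1 q b s n)" and "pos_def (K2 q a s n)"
  shows "(\<forall>j\<le>n. invertible_mat (Gam1 q b s j (complex_of_real a)))
       \<and> (\<forall>j<n. invertible_mat (Q2 q a b s j (complex_of_real a)))
       \<and> (\<forall>j\<le>n. \<forall>z::complex.
            dodd q a b s j z =
              (let r = minv (Gam1 q b s j (complex_of_real a)) * The1 q b s j (complex_of_real a)
               in blk2 (1\<^sub>m q) r (0\<^sub>m q q) (1\<^sub>m q)
                * blk2 (1\<^sub>m q) (0\<^sub>m q q) (- ((z - complex_of_real a) \<cdot>\<^sub>m mbold q a b s j)) (1\<^sub>m q)
                * blk2 (1\<^sub>m q) (- r) (0\<^sub>m q q) (1\<^sub>m q)))
       \<and> (\<forall>j<n. \<forall>z::complex.
            deven q a b s j z =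
              (let t = minv (Q2 q a b s j (complex_of_real a)) * P2 q a b s j (complex_of_real a)
               in blk2 (1\<^sub>m q) (0\<^sub>m q q) (- t) (1\<^sub>m q)
                * blk2 (1\<^sub>m q) ((z - complex_of_real a) \<cdot>\<^sub>m lbold q a b s j) (0\<^sub>m q q) (1\<^sub>m q)
                * blk2 (1\<^sub>m q) (0\<^sub>m q q) t (1\<^sub>m q)))"
proof -
  have "hausdorff_moments q n a b s"
  proof
    have "n - 1 + 1 = n" using assms(2) by simp
    then show "aniso_herm (n*q) (H2 q a b s (n-1))"
      using pos_def_aniso_herm[OF assms(6) H2_carrier] by simp
  qed (use assms pos_def_aniso_herm[OF assms(7) K1_carrier] in auto)
  then interpret hausdorff_moments q n a b s .
  show ?thesis using dodd_factorization deven_factorization by blast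
qed

end
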